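(* Let $\alpha\in[1/2,1)\cup(1,\infty)$, let $p_X$ be a distribution on a finite set $\mathcal X$ and $p_{Y\mid X}$ a channel to a finite set $\mathcal Y$, and let $\tilde q^{(0)}_{X,Y}$ be an initial joint distribution on $\mathcal X\times\mathcal Y$. (i) If $\alpha\in[1/2,1)$, define for $k\ge0$: $q_Y^{(k)}(y)=\sum_x\tilde q^{(k)}_{X,Y}(x,y)$ and $\tilde q^{(k+1)}_{X,Y}(x,y)=\bar q_X(x)\bar q_{Y\mid X}(y\mid x)$ with $$\bar q_X(x)=\frac{p_X(x)\big(\sum_yp_{Y\mid X}(y\mid x)^\alpha q^{(k)}_Y(y)^{1-\alpha}\big)^{1/\alpha}}{\sum_{x'}p_X(x')\big(\sum_yp_{Y\mid X}(y\mid x')^\alpha q^{(k)}_Y(y)^{1-\alpha}\big)^{1/\alpha}},\quad \bar q_{Y\mid X}(y\mid x)=\frac{p_{Y\mid X}(y\mid x)^\alpha q^{(k)}_Y(y)^{1-\alpha}}{\sum_{y'}p_{Y\mid X}(y'\mid x)^\alpha q^{(k)}_Y(y')^{1-\alpha}}.$$ Then $\lim_{k\to\infty}F_\alpha^{\mathrm{LP}}(\tilde q^{(k+1)}_{X,Y},q_Y^{(k)})=I_\alpha^{\mathrm{LP}}(X;Y)$. (ii) If $\alpha\in(1,\infty)$, define for $k\ge0$: $r^{(k)}_{X\mid Y}(x\mid y)=\tilde q^{(k)}_{X,Y}(x,y)/\sum_{x'}\tilde q^{(k)}_{X,Y}(x',y)$ and $\tilde q^{(k+1)}_{X,Y}(x,y)=\hat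 q_X(x)\hat q_{Y\mid X}(y\mid x)$ with $$\hat q_X(x)=\frac{p_X(x)^{\frac{\alpha}{2\alpha-1}}\big(\sum_yp_{Y\mid X}(y\mid x)r^{(k)}_{X\mid Y}(x\mid y)^{1-\frac1\alpha}\big)^{\frac{\alpha}{2\alpha-1}}}{\sum_{x'}p_X(x')^{\frac{\alpha}{2\alpha-1}}\big(\sum_yp_{Y\mid X}(y\mid x')r^{(k)}_{X\mid Y}(x'\mid y)^{1-\frac1\alpha}\big)^{\frac{\alpha}{2\alpha-1}}},\quad \hat q_{Y\mid X}(y\mid x)=\frac{p_{Y\mid X}(y\mid x)r^{(k)}_{X\mid Y}(x\mid y)^{1-\frac1\alpha}}{\sum_{x'}p_{Y\mid X}(y\mid x')r^{(k)}_{X\mid Y}(x'\mid y)^{1-\frac1\alpha}}.$$ Then $\lim_{k\to\infty}\tilde F_\alpha^{\mathrm{LP}}(\tilde q^{(k+1)}_{X,Y},r^{(k)}_{X\mid Y})=I_\alpha^{\mathrm{LP}}(X;Y)$.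
   Context: $\log$ is natural and $D$ is the Kullback–Leibler divergence. For a joint distribution $\tilde q_{X,Y}=\tilde q_X\tilde q_{Y\mid X}$, a distribution $q_Y$ on $\mathcal Y$ and a reverse channel $r_{X\mid Y}$ (a family of distributions $r_{X\mid Y}(\cdot\mid y)$ on $\mathcal X$): $F_\alpha^{\mathrm{LP}}(\tilde q_{X,Y},q_Y):=\frac{\alpha}{1-\alpha}D(\tilde q_{X,Y}\|\tilde q_Xp_{Y\mid X})+D(\tilde q_X\tilde q_{Y\mid X}\|\tilde q_Xq_Y)+\frac{\alpha}{1-\alpha}D(\tilde q_X\|p_X)$ and $\tilde F_\alpha^{\mathrm{LP}}(\tilde q_{X,Y},r_{X\mid Y}):=\frac{\alpha}{1-\alpha}D(\tilde q_{X,Y}\|\tilde q_Xp_{Y\mid X})+\mathbb E^{\tilde q_{X,Y}}[\log\frac{r_{X\mid Y}(X\mid Y)}{\tilde q_X(X)}]+\frac{\alpha}{1-\alpha}D(\tilde q_X\|p_X)$. The Lapidoth–Pfister mutual information is $I_\alpha^{\mathrm{LP}}(X;Y):=\min_{q_X}\min_{q_Y}D_\alpha(p_Xp_{Y\mid X}\|q_Xq_Y)$ with $D_\alpha(p\|q):=\frac{1}{\alpha-1}\log\sum_zp(z)^\alpha q(z)^{1-\alpha}$. *)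

theory Defs
  imports "HOL-Analysis.Analysis"
begin

definition is_dist :: "('a::finite \<Rightarrow> real) \<Rightarrow> bool" where
  "is_dist p \<longleftrightarrow> (\<forall>z. 0 \<le> p z) \<and> sum p UNIV = 1"

definition KL :: "('a::finite \<Rightarrow> real) \<Rightarrow> ('a \<Rightarrow> real) \<Rightarrow> ereal" where
  "KL p q = (if \<exists>z. p z > 0 \<and> q z = 0 then \<infinity>
             else ereal (\<Sum>z\<in>{z. p z > 0}. p z * ln (p z / q z)))"

definition renyi_div :: "real \<Rightarrow> ('a::finite \<Rightarrow> real) \<Rightarrow> ('a \<Rightarrow> real) \<Rightarrow> ereal" where
  "renyi_div a p q =
     (if 1 < a then
        (if \<exists>z. p z > 0 \<and> q z = 0 then \<infinity>
         else ereal (1 / (a - 1) * ln (\<Sum>z\<in>{z. p z > 0}. p z powr a * q z powr (1 - a))))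
      else
        (let s = (\<Sum>z\<in>{z. p z > 0}. p z powr a * q z powr (1 - a)) in
         if s = 0 then \<infinity> else ereal (1 / (a - 1) * ln s)))"

definition margX :: "('x::finite \<times> 'y::finite \<Rightarrow> real) \<Rightarrow> 'x \<Rightarrow> real" where
  "margX q x = (\<Sum>y\<in>UNIV. q (x, y))"

definition margY :: "('x::finite \<times> 'y::finite \<Rightarrow> real) \<Rightarrow> 'y \<Rightarrow> real" where
  "margY q y = (\<Sum>x\<in>UNIV. q (x, y))"

text \<open>Lapidoth--Pfister mutual information: min over q_X, q_Y of D_alpha(p_X p_{Y|X} || q_X q_Y).
  W x y stands for p_{Y|X}(y|x).\<close>
definition I_LP :: "real \<Rightarrow> ('x::finite \<Rightarrow> real) \<Rightarrow> ('x \<Rightarrow> 'y::finite \<Rightarrow> real) \<Rightarrow> ereal" where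
  "I_LP a pX W = (INF qX\<in>{q. is_dist q}. INF qY\<in>{q. is_dist q}.
      renyi_div a (\<lambda>(x, y). pX x * W x y) (\<lambda>(x, y). qX x * qY y))"

definition F_LP :: "real \<Rightarrow> ('x::finite \<Rightarrow> real) \<Rightarrow> ('x \<Rightarrow> 'y::finite \<Rightarrow> real)
    \<Rightarrow> ('x \<times> 'y \<Rightarrow> real) \<Rightarrow> ('y \<Rightarrow> real) \<Rightarrow> ereal" where
  "F_LP a pX W qt qY =
     ereal (a / (1 - a)) * KL qt (\<lambda>(x, y). margX qt x * W x y)
     + KL qt (\<lambda>(x, y). margX qt x * qY y)
     + ereal (a / (1 - a)) * KL (margX qt) pX"

text \<open>Expectation under qt of log (r(X|Y) / qt_X(X)); r x y stands for r_{X|Y}(x|y).\<close>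
definition exp_log_ratio :: "('x::finite \<times> 'y::finite \<Rightarrow> real) \<Rightarrow> ('x \<Rightarrow> 'y \<Rightarrow> real) \<Rightarrow> ereal" where
  "exp_log_ratio qt r =
     (if \<exists>x y. qt (x, y) > 0 \<and> r x y = 0 then -\<infinity>
      else ereal (\<Sum>z\<in>{z. qt z > 0}. qt z * ln (r (fst z) (snd z) / margX qt (fst z))))"

definition Ft_LP :: "real \<Rightarrow> ('x::finite \<Rightarrow> real) \<Rightarrow> ('x \<Rightarrow> 'y::finite \<Rightarrow> real)
    \<Rightarrow> ('x \<times> 'y \<Rightarrow> real) \<Rightarrow> ('x \<Rightarrow> 'y \<Rightarrow> real) \<Rightarrow> ereal" where
  "Ft_LP a pX W qt r =
     ereal (a / (1 - a)) * KL qt (\<lambda>(x, y). margX qt x * W x y)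
     + exp_log_ratio qt r
     + ereal (a / (1 - a)) * KL (margX qt) pX"

definition step_i :: "real \<Rightarrow> ('x::finite \<Rightarrow> real) \<Rightarrow> ('x \<Rightarrow> 'y::finite \<Rightarrow> real)
    \<Rightarrow> ('x \<times> 'y \<Rightarrow> real) \<Rightarrow> ('x \<times> 'y \<Rightarrow> real)" where
  "step_i a pX W q =
     (let qY = margY q;
          g = (\<lambda>x. \<Sum>y\<in>UNIV. W x y powr a * qY y powr (1 - a));
          qbX = (\<lambda>x. pX x * g x powr (1 / a) / (\<Sum>x'\<in>UNIV. pX x' * g x' powr (1 / a)));
          qbYX = (\<lambda>x y. W x y powr a * qY y powr (1 - a) / g x)
      in (\<lambda>(x, y). qbX x * qbYX x y))"

definition rev_chan :: "('x::finite \<times> 'y::finite \<Rightarrow> real) \<Rightarrow> 'x \<Rightarrow> 'y \<Rightarrow> real" where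
  "rev_chan q x y = q (x, y) / (\<Sum>x'\<in>UNIV. q (x', y))"

definition step_ii :: "real \<Rightarrow> ('x::finite \<Rightarrow> real) \<Rightarrow> ('x \<Rightarrow> 'y::finite \<Rightarrow> real)
    \<Rightarrow> ('x \<times> 'y \<Rightarrow> real) \<Rightarrow> ('x \<times> 'y \<Rightarrow> real)" where
  "step_ii a pX W q =
     (let r = rev_chan q;
          b = a / (2 * a - 1);
          h = (\<lambda>x y. W x y * r x y powr (1 - 1 / a));
          qhX = (\<lambda>x. pX x powr b * (\<Sum>y\<in>UNIV. h x y) powr b
                     / (\<Sum>x'\<in>UNIV. pX x' powr b * (\<Sum>y\<in>UNIV. h x' y) powr b));
          qhYX = (\<lambda>x y. h x y / (\<Sum>y'\<in>UNIV. h x y'))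
      in (\<lambda>(x, y). qhX x * qhYX x y))"

end

theory Submission
  imports Defs
begin

text \<open>Both parts are alternating minimisations along which the objective has a closed form.

For 1/2 <= a < 1, F_LP (qbar qY) qY equals renyi_min qY = a/(a-1) ln (Phi qY), the minimum over
qX of the Renyi divergence of pX W from qX qY (by Hoelder), so I_LP is the infimum of renyi_min.
A three-point inequality renyi_min q_k - renyi_min q <= D(u||q_k) - D(u||q_(k+1)), where u is the
output marginal of qbar q, telescopes along the decreasing sequence renyi_min q_k to
renyi_min q_N - renyi_min q <= D(u||q_0) / (N+1).

For a > 1, Ft_LP (qhat r) r equals H r = (2a-1)/(a-1) ln (Z r), and two applications of Hoelder
bound H r by the Renyi divergence of pX W from every product distribution, so H r_k <= I_LP.
Each step increases H by at least the log-gain E log (r_(k+1) / r_k). Conversely, the output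
marginal of qhat r_k has renyi_min at most H r_k + (E (r_(k+1) / r_k) powr (a-1) - 1) / (a-1),
and a uniform lower bound on the reverse channels makes this excess a bounded multiple of the
log-gain, which tends to 0.\<close>

section \<open>Marginals and relative entropy\<close>

lemma sum_UNIV_prod:
  fixes f :: "'x::finite \<times> 'y::finite \<Rightarrow> 'b::comm_monoid_add"
  shows "(\<Sum>z\<in>UNIV. f z) = (\<Sum>x\<in>UNIV. \<Sum>y\<in>UNIV. f (x, y))"
  using sum.cartesian_product[of "\<lambda>x y. f (x, y)" UNIV UNIV] by (simp add: UNIV_Times_UNIV)

lemma sum_mult_fst_eq_margX:
  fixes t :: "'x::finite \<times> 'y::finite \<Rightarrow> real"
  shows "(\<Sum>z\<in>UNIV. t z * f (fst z)) = (\<Sum>x\<in>UNIV. margX t x * f x)"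
  unfolding sum_UNIV_prod margX_def by (simp add: sum_distrib_right)

lemma sum_mult_snd_eq_margY:
  fixes t :: "'x::finite \<times> 'y::finite \<Rightarrow> real"
  shows "(\<Sum>z\<in>UNIV. t z * f (snd z)) = (\<Sum>y\<in>UNIV. margY t y * f y)"
  unfolding sum_UNIV_prod margY_def sum_distrib_right snd_conv by (rule sum.swap)

lemma sum_margX: "(\<Sum>x\<in>UNIV. margX t x) = (\<Sum>z\<in>UNIV. t z)"
  using sum_mult_fst_eq_margX[of t "\<lambda>_. 1"] by simp

lemma sum_margY: "(\<Sum>y\<in>UNIV. margY t y) = (\<Sum>z\<in>UNIV. t z)"
  using sum_mult_snd_eq_margY[of t "\<lambda>_. 1"] by simp

lemma margX_nonneg: "(\<And>z. 0 \<le> t z) \<Longrightarrow> 0 \<le> margX t x"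
  by (simp add: margX_def sum_nonneg)

lemma margY_nonneg: "(\<And>z. 0 \<le> t z) \<Longrightarrow> 0 \<le> margY t y"
  by (simp add: margY_def sum_nonneg)

lemma le_margX: "(\<And>z. 0 \<le> t z) \<Longrightarrow> t (x, y) \<le> margX t x"
  unfolding margX_def by (rule member_le_sum) auto

lemma le_margY: "(\<And>z. 0 \<le> t z) \<Longrightarrow> t (x, y) \<le> margY t y"
  unfolding margY_def by (rule member_le_sum) auto

lemma margX_pos: "(\<And>z. 0 \<le> t z) \<Longrightarrow> 0 < t (x, y) \<Longrightarrow> 0 < margX t x"
  using le_margX[of t x y] by simp

lemma margY_pos: "(\<And>z. 0 \<le> t z) \<Longrightarrow> 0 < t (x, y) \<Longrightarrow> 0 < margY t y"
  using le_margY[of t x y] by simp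

lemma margX_pos_imp_ex: "0 < margX t x \<Longrightarrow> \<exists>y. 0 < t (x, y)"
  unfolding margX_def by (metis not_less sum_nonpos)

lemma margY_pos_imp_ex: "0 < margY t y \<Longrightarrow> \<exists>x. 0 < t (x, y)"
  unfolding margY_def by (metis not_less sum_nonpos)

lemma is_dist_nonneg: "is_dist p \<Longrightarrow> 0 \<le> p z"
  by (simp add: is_dist_def)

lemma is_dist_sum: "is_dist p \<Longrightarrow> sum p UNIV = 1"
  by (simp add: is_dist_def)

lemma is_dist_le_1: "is_dist p \<Longrightarrow> p z \<le> 1"
  unfolding is_dist_def by (metis UNIV_I finite member_le_sum)

lemma is_dist_margY: "is_dist q \<Longrightarrow> is_dist (margY q)"
  unfolding is_dist_def by (metis margY_nonneg sum_margY)

lemma rev_chan_eq: "rev_chan q x y = q (x, y) / margY q y"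
  by (simp add: rev_chan_def margY_def)

lemma margY_mult_rev_chan:
  assumes "\<And>z. 0 \<le> q z" shows "margY q y * rev_chan q x y = q (x, y)"
proof (cases "margY q y = 0")
  case True
  then show ?thesis using le_margY[of q x y, OF assms] assms[of "(x, y)"] by simp
qed (simp add: rev_chan_eq)

lemma rev_chan_nonneg: "(\<And>z. 0 \<le> q z) \<Longrightarrow> 0 \<le> rev_chan q x y"
  by (simp add: rev_chan_eq margY_nonneg)

lemma rev_chan_le_1:
  assumes "\<And>z. 0 \<le> q z" shows "rev_chan q x y \<le> 1"
  using le_margY[of q x y, OF assms] margY_nonneg[of q y, OF assms]
  by (cases "margY q y = 0") (auto simp: rev_chan_eq divide_le_eq_1)

lemma sum_rev_chan_le_1: "(\<Sum>x\<in>UNIV. rev_chan q x y) \<le> 1"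
  by (cases "margY q y = 0") (simp_all add: rev_chan_eq sum_divide_distrib[symmetric] margY_def)

lemma rev_chan_pos: "(\<And>z. 0 \<le> q z) \<Longrightarrow> 0 < q (x, y) \<Longrightarrow> 0 < rev_chan q x y"
  using le_margY[of q x y] by (simp add: rev_chan_eq)

lemma le_rev_chan:
  assumes "is_dist q" shows "q (x, y) \<le> rev_chan q x y"
proof (cases "margY q y = 0")
  case True
  then show ?thesis
    using le_margY[of q x y] is_dist_nonneg[OF assms] by (simp add: rev_chan_eq)
next
  case False
  then have "0 < margY q y" using margY_nonneg[of q y] is_dist_nonneg[OF assms] by simp
  then show ?thesis using is_dist_le_1[OF is_dist_margY[OF assms], of y] is_dist_nonneg[OF assms, of "(x, y)"]
    by (simp add: rev_chan_eq le_divide_eq mult_left_le)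
qed

lemma sum_support_eq_sum_UNIV:
  fixes t :: "'a::finite \<Rightarrow> real"
  assumes "\<And>z. 0 \<le> t z"
  shows "(\<Sum>z\<in>{z. 0 < t z}. t z * f z) = (\<Sum>z\<in>UNIV. t z * f z)"
  using assms by (intro sum.mono_neutral_left) (auto simp: order.order_iff_strict)

lemma sum_mult_cong_nonzero:
  fixes t :: "'a \<Rightarrow> real"
  assumes "\<And>z. z \<in> A \<Longrightarrow> t z \<noteq> 0 \<Longrightarrow> f z = g z"
  shows "(\<Sum>z\<in>A. t z * f z) = (\<Sum>z\<in>A. t z * g z)"
proof (rule sum.cong[OF refl])
  fix z assume "z \<in> A"
  then show "t z * f z = t z * g z" using assms by (cases "t z = 0") auto
qed

definition rel_entropy :: "('a::finite \<Rightarrow> real) \<Rightarrow> ('a \<Rightarrow> real) \<Rightarrow> real" where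
  "rel_entropy p q = (\<Sum>z\<in>UNIV. p z * ln (p z / q z))"

lemma rel_entropy_self: "rel_entropy p p = 0"
  unfolding rel_entropy_def by (intro sum.neutral) auto

lemma KL_eq_rel_entropy:
  assumes "\<And>z. 0 \<le> p z" "\<And>z. 0 < p z \<Longrightarrow> q z \<noteq> 0"
  shows "KL p q = ereal (rel_entropy p q)"
  using assms sum_support_eq_sum_UNIV[of p "\<lambda>z. ln (p z / q z)"]
  by (auto simp: KL_def rel_entropy_def)

lemma gibbs_inequality:
  assumes "\<And>z. 0 \<le> p z" "\<And>z. 0 \<le> q z" "\<And>z. 0 < p z \<Longrightarrow> 0 < q z"
  shows "sum p UNIV - sum q UNIV \<le> rel_entropy p q"
proof -
  have "p z - q z \<le> p z * ln (p z / q z)" for z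
  proof (cases "p z = 0")
    case False
    then have p: "0 < p z" and q: "0 < q z" using assms[of z] by auto
    have "- ln (p z / q z) = ln (q z / p z)" using p q by (simp add: ln_div)
    also have "\<dots> \<le> q z / p z - 1" using p q by (intro ln_le_minus_one) simp
    finally show ?thesis using p by (simp add: field_simps)
  qed (use assms in simp)
  then show ?thesis unfolding rel_entropy_def by (simp add: sum_subtractf[symmetric] sum_mono)
qed

lemma rel_entropy_nonneg:
  assumes "\<And>z. 0 \<le> p z" "\<And>z. 0 \<le> q z" "\<And>z. 0 < p z \<Longrightarrow> 0 < q z"
    and "sum q UNIV \<le> sum p UNIV"
  shows "0 \<le> rel_entropy p q"
proof -
  have "sum p UNIV - sum q UNIV \<le> rel_entropy p q" by (rule gibbs_inequality) (use assms in auto)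
  then show ?thesis using assms(4) by linarith
qed

lemma rel_entropy_margY_le:
  fixes t T :: "'x::finite \<times> 'y::finite \<Rightarrow> real"
  assumes t: "\<And>z. 0 \<le> t z" and T: "\<And>z. 0 \<le> T z" and supp: "\<And>z. 0 < t z \<Longrightarrow> 0 < T z"
  shows "rel_entropy (margY t) (margY T) \<le> rel_entropy t T"
proof -
  define u q where "u = margY t" and "q = margY T"
  define s where "s z = T z * (u (snd z) / q (snd z))" for z
  have pos: "0 < T z \<and> 0 < u (snd z) \<and> 0 < q (snd z)" if "0 < t z" for z
    using that supp[OF that] le_margY[of t "fst z" "snd z", OF t] le_margY[of T "fst z" "snd z", OF T]
    by (simp add: u_def q_def)
  have "sum s UNIV = (\<Sum>y\<in>UNIV. q y * (u y / q y))"
    unfolding s_def q_def by (rule sum_mult_snd_eq_margY)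
  also have "\<dots> \<le> sum u UNIV"
    by (intro sum_mono) (simp add: u_def margY_nonneg t)
  also have "\<dots> = sum t UNIV" by (simp add: u_def sum_margY)
  finally have "0 \<le> rel_entropy t s"
    using pos by (intro rel_entropy_nonneg) (auto simp: s_def t T u_def q_def margY_nonneg)
  also have "rel_entropy t s = rel_entropy t T - (\<Sum>z\<in>UNIV. t z * ln (u (snd z) / q (snd z)))"
    unfolding rel_entropy_def sum_subtractf[symmetric] right_diff_distrib[symmetric]
  proof (intro sum_mult_cong_nonzero)
    fix z assume "t z \<noteq> 0"
    then have "0 < t z" using t[of z] by simp
    with pos[OF this] show "ln (t z / s z) = ln (t z / T z) - ln (u (snd z) / q (snd z))"
      by (simp add: s_def ln_div ln_mult)
  qed
  also have "(\<Sum>z\<in>UNIV. t z * ln (u (snd z) / q (snd z))) = rel_entropy u q"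
    unfolding rel_entropy_def u_def by (rule sum_mult_snd_eq_margY)
  finally show ?thesis by (simp add: u_def q_def)
qed

lemma sum_ln_ratio_eq_rel_entropy_diff:
  fixes t :: "'x::finite \<times> 'y::finite \<Rightarrow> real"
  assumes t: "\<And>z. 0 \<le> t z" and pos: "\<And>x y. 0 < t (x, y) \<Longrightarrow> 0 < p y \<and> 0 < q y"
  shows "(\<Sum>z\<in>UNIV. t z * ln (p (snd z) / q (snd z))) = rel_entropy (margY t) q - rel_entropy (margY t) p"
proof -
  have "0 < p y \<and> 0 < q y" if "0 < margY t y" for y
    using margY_pos_imp_ex[OF that] pos by blast
  then have "(\<Sum>y\<in>UNIV. margY t y * ln (p y / q y)) = rel_entropy (margY t) q - rel_entropy (margY t) p"
    unfolding rel_entropy_def sum_subtractf[symmetric] right_diff_distrib[symmetric]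
    using margY_nonneg[of t, OF t] by (intro sum_mult_cong_nonzero) (force simp: ln_div order.strict_iff_order)
  then show ?thesis using sum_mult_snd_eq_margY[of t "\<lambda>y. ln (p y / q y)"] by simp
qed

section \<open>Elementary inequalities and limits\<close>

lemma weighted_AM_GM:
  fixes u v \<theta> :: real
  assumes "0 \<le> u" "0 \<le> v" "0 < \<theta>" "\<theta> < 1"
  shows "u powr \<theta> * v powr (1 - \<theta>) \<le> \<theta> * u + (1 - \<theta>) * v"
proof (cases "u = 0 \<or> v = 0")
  case False
  then show ?thesis using assms Youngs_inequality_0[of \<theta> "1 - \<theta>" u v] by auto
qed (use assms in auto)

lemma Holder_inequality_sum:
  fixes A B :: "'a \<Rightarrow> real"
  assumes "finite I" "\<And>i. i \<in> I \<Longrightarrow> 0 \<le> A i" "\<And>i. i \<in> I \<Longrightarrow> 0 \<le> B i" "0 < \<theta>" "\<theta> < 1"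
  shows "(\<Sum>i\<in>I. A i powr \<theta> * B i powr (1 - \<theta>)) \<le> sum A I powr \<theta> * sum B I powr (1 - \<theta>)"
proof (cases "sum A I = 0 \<or> sum B I = 0")
  case True
  then have "\<forall>i\<in>I. A i = 0 \<or> B i = 0" using sum_nonneg_eq_0_iff assms(1-3) by blast
  then have "(\<Sum>i\<in>I. A i powr \<theta> * B i powr (1 - \<theta>)) = 0" using assms(5) by (intro sum.neutral) auto
  then show ?thesis by simp
next
  case False
  define SA SB where "SA = sum A I" and "SB = sum B I"
  have SA: "0 < SA" and SB: "0 < SB" using False assms(2,3) sum_nonneg unfolding SA_def SB_def
    by (metis order.not_eq_order_implies_strict)+
  have "A i powr \<theta> * B i powr (1 - \<theta>) \<le> SA powr \<theta> * SB powr (1 - \<theta>) * (\<theta> * (A i / SA) + (1 - \<theta>) * (B i / SB))"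
    if "i \<in> I" for i
  proof -
    have "(A i / SA) powr \<theta> * (B i / SB) powr (1 - \<theta>) \<le> \<theta> * (A i / SA) + (1 - \<theta>) * (B i / SB)"
      using SA SB assms(2-5) that by (intro weighted_AM_GM) auto
    moreover have "A i powr \<theta> * B i powr (1 - \<theta>)
        = SA powr \<theta> * SB powr (1 - \<theta>) * ((A i / SA) powr \<theta> * (B i / SB) powr (1 - \<theta>))"
      using SA SB assms(2,3) that by (simp add: powr_divide)
    ultimately show ?thesis using SA SB by (simp add: mult_left_mono)
  qed
  then have "(\<Sum>i\<in>I. A i powr \<theta> * B i powr (1 - \<theta>))
      \<le> (\<Sum>i\<in>I. SA powr \<theta> * SB powr (1 - \<theta>) * (\<theta> * (A i / SA) + (1 - \<theta>) * (B i / SB)))"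
    by (rule sum_mono)
  also have "\<dots> = SA powr \<theta> * SB powr (1 - \<theta>) * (\<theta> * (SA / SA) + (1 - \<theta>) * (SB / SB))"
    unfolding sum_distrib_left[symmetric] sum.distrib sum_divide_distrib[symmetric] SA_def SB_def
    by simp
  finally show ?thesis using SA SB by (simp add: SA_def SB_def)
qed

lemma nonneg_if_flat_convex_at_1:
  fixes f f' f'' :: "real \<Rightarrow> real"
  assumes f': "\<And>s. 0 < s \<Longrightarrow> (f has_real_derivative f' s) (at s)"
    and f'': "\<And>s. 0 < s \<Longrightarrow> (f' has_real_derivative f'' s) (at s)"
    and convex: "\<And>s. 0 < s \<Longrightarrow> s \<le> T \<Longrightarrow> 0 \<le> f'' s"
    and "f 1 = 0" "f' 1 = 0" "1 \<le> T" "0 < t" "t \<le> T"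
  shows "0 \<le> f t"
proof -
  have f'_mono: "f' s \<le> f' s'" if "0 < s" "s \<le> s'" "s' \<le> T" for s s'
  proof (rule DERIV_nonneg_imp_nondecreasing[OF that(2)])
    fix x assume "s \<le> x" "x \<le> s'"
    then show "\<exists>y. (f' has_real_derivative y) (at x) \<and> 0 \<le> y"
      using f''[of x] convex[of x] that by auto
  qed
  consider "t \<le> 1" | "1 \<le> t" by linarith
  then have "f 1 \<le> f t"
  proof cases
    case 1
    show ?thesis
    proof (rule DERIV_nonpos_imp_nonincreasing[OF 1])
      fix s assume "t \<le> s" "s \<le> 1"
      then show "\<exists>y. (f has_real_derivative y) (at s) \<and> y \<le> 0"
        using f'_mono[of s 1] f'[of s] assms(5-7) by force
    qed
  next
    case 2
    show ?thesis
    proof (rule DERIV_nonneg_imp_nondecreasing[OF 2])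
      fix s assume "1 \<le> s" "s \<le> t"
      then show "\<exists>y. (f has_real_derivative y) (at s) \<and> 0 \<le> y"
        using f'_mono[of 1 s] f'[of s] assms(5,8) by force
    qed
  qed
  then show ?thesis using assms(4) by simp
qed

text \<open>Both sides are Bregman divergences at 1, of \<open>t powr a\<close> and of \<open>t * ln t\<close>;
  on \<open>(0, T]\<close> the second derivative of the first is at most the constant times that of the second.\<close>
lemma powr_bregman_le_xlnx_bregman:
  fixes a T t :: real
  assumes a: "1 < a" and T: "1 \<le> T" and t: "0 \<le> t" "t \<le> T"
  shows "t powr a - 1 - a * (t - 1) \<le> (a * (a - 1) * T powr (a - 1) + (a - 1)) * (t * ln t - t + 1)"
proof -
  define C where "C = a * (a - 1) * T powr (a - 1) + (a - 1)"
  have C: "a - 1 \<le> C" using a by (simp add: C_def)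
  define k where "k s = C * (s * ln s - s + 1) - (s powr a - 1 - a * (s - 1))" for s
  define k' where "k' s = C * ln s - a * s powr (a - 1) + a" for s
  define k'' where "k'' s = C / s - a * (a - 1) * s powr (a - 2)" for s
  have "(k has_real_derivative k' s) (at s)" if "0 < s" for s
  proof -
    have "((\<lambda>s. s * ln s - s + 1) has_real_derivative ln s) (at s)"
      using that by (auto intro!: derivative_eq_intros)
    with has_real_derivative_powr[OF that, of a]
    have "(k has_real_derivative C * ln s - (a * s powr (a - 1) - 0 - a * (1 - 0))) (at s)"
      unfolding k_def using that by (auto intro!: derivative_eq_intros)
    then show ?thesis by (simp add: k'_def algebra_simps)
  qed
  moreover have "(k' has_real_derivative k'' s) (at s)" if "0 < s" for s
  proof -
    have "(k' has_real_derivative C * (1 / s) - a * ((a - 1) * s powr (a - 1 - 1)) + 0) (at s)"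
      unfolding k'_def using that has_real_derivative_powr[OF that, of "a - 1"]
      by (auto intro!: derivative_eq_intros)
    then show ?thesis by (simp add: k''_def algebra_simps)
  qed
  moreover have "0 \<le> k'' s" if s: "0 < s" "s \<le> T" for s
  proof -
    have "a * (a - 1) * s powr (a - 2) = a * (a - 1) * s powr (a - 1) / s"
      using s by (simp add: powr_diff power2_eq_square)
    also have "\<dots> \<le> a * (a - 1) * T powr (a - 1) / s"
      using a s by (intro divide_right_mono mult_left_mono powr_mono2) auto
    also have "\<dots> \<le> C / s" using a s by (intro divide_right_mono) (auto simp: C_def)
    finally show ?thesis by (simp add: k''_def)
  qed
  ultimately have "0 \<le> k t" if "0 < t"
    using nonneg_if_flat_convex_at_1[of k k' k'' T t] that t T by (simp add: k_def k'_def)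
  moreover have "0 \<le> k 0" using C by (simp add: k_def)
  ultimately show ?thesis using t by (cases "t = 0") (auto simp: k_def C_def)
qed

lemma finite_ex_pos_lower_bound:
  fixes f :: "'a::finite \<Rightarrow> real"
  shows "\<exists>e>0. \<forall>z. 0 < f z \<longrightarrow> e \<le> f z"
proof (cases "{z. 0 < f z} = {}")
  case False
  then have "0 < Min (f ` {z. 0 < f z})" by (subst Min_gr_iff) auto
  then show ?thesis by (intro exI[of _ "Min (f ` {z. 0 < f z})"]) auto
qed (auto intro: exI[of _ 1])

lemma telescoping_rate_bound:
  fixes s E :: "nat \<Rightarrow> real"
  assumes step: "\<And>k. s k - c \<le> E k - E (Suc k)" and E: "\<And>k. 0 \<le> E k"
    and mono: "\<And>k. s (Suc k) \<le> s k"
  shows "(real N + 1) * (s N - c) \<le> E 0"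
proof -
  have "(real N + 1) * (s N - c) = (\<Sum>k<Suc N. s N - c)" by simp
  also have "\<dots> \<le> (\<Sum>k<Suc N. s k - c)"
    using mono by (intro sum_mono) (simp add: antimono_iff_le_Suc[THEN iffD2, unfolded antimono_def])
  also have "\<dots> \<le> (\<Sum>k<Suc N. E k - E (Suc k))" by (intro sum_mono step)
  also have "\<dots> = E 0 - E (Suc N)" by (rule sum_lessThan_telescope')
  finally show ?thesis using E[of "Suc N"] by simp
qed

lemma tendsto_ereal_from_rate_bounds:
  fixes s :: "nat \<Rightarrow> real" and L :: ereal
  assumes lower: "\<And>k. L \<le> ereal (s k)"
    and rate: "\<And>y. L < y \<Longrightarrow> \<exists>c B. ereal c < y \<and> (\<forall>N. (real N + 1) * (s N - c) \<le> B)"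
  shows "(\<lambda>k. ereal (s k)) \<longlonglongrightarrow> L"
proof (rule order_tendstoI)
  fix y assume "y < L"
  then show "\<forall>\<^sub>F k in sequentially. y < ereal (s k)"
    using lower by (intro always_eventually allI) (blast intro: order.strict_trans2)
next
  fix y assume "L < y"
  then obtain c B where c: "ereal c < y" and B: "\<And>N. (real N + 1) * (s N - c) \<le> B"
    using rate by blast
  show "\<forall>\<^sub>F k in sequentially. ereal (s k) < y"
  proof (cases y)
    case (real y')
    then have d: "0 < y' - c" using c by simp
    obtain N0 :: nat where N0: "B / (y' - c) < real N0" using reals_Archimedean2 by blast
    have "s N < y'" if "N0 \<le> N" for N
    proof -
      have "B < real N0 * (y' - c)" using N0 d by (simp add: divide_less_eq)
      also have "\<dots> \<le> (real N + 1) * (y' - c)" using that d by (intro mult_right_mono) auto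
      finally have "(real N + 1) * (s N - c) < (real N + 1) * (y' - c)" using B[of N] by linarith
      then show ?thesis by (simp add: mult_less_cancel_left_pos)
    qed
    then show ?thesis unfolding eventually_sequentially using real by auto
  qed (use c in auto)
qed

lemma incseq_tendsto_ereal_squeeze:
  fixes s :: "nat \<Rightarrow> real" and L :: ereal
  assumes inc: "incseq s" and upper: "\<And>k. ereal (s k) \<le> L"
    and lower: "\<And>k. L \<le> ereal (s k + K * (s (Suc k) - s k))"
  shows "(\<lambda>k. ereal (s k)) \<longlonglongrightarrow> L"
proof -
  obtain l where l: "L = ereal l" using upper[of 0] lower[of 0] by (cases L) auto
  then obtain m where m: "s \<longlonglongrightarrow> m" "\<And>k. s k \<le> m"
    using incseq_convergent[OF inc, of l] upper by auto
  have "m \<le> l" using m(1) upper l by (intro LIMSEQ_le_const2) auto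
  moreover have "(\<lambda>k. s k + K * (s (Suc k) - s k)) \<longlonglongrightarrow> m + K * (m - m)"
    by (intro tendsto_intros m(1) LIMSEQ_Suc)
  then have "l \<le> m" using lower l by (intro LIMSEQ_le_const) auto
  ultimately show ?thesis using m(1) l by (simp add: tendsto_ereal)
qed

lemma powr_split_Holder:
  fixes w r q a :: real
  assumes "0 \<le> w" "0 \<le> r" "0 < q" "0 < a"
  shows "w * r powr (1 - 1 / a) = (w powr a * q powr (1 - a)) powr (1 / a) * (r * q) powr (1 - 1 / a)"
proof (cases "w = 0 \<or> r = 0")
  case False
  then have "0 < w" "0 < r" using assms by auto
  then have "ln (w * r powr (1 - 1 / a))
      = ln ((w powr a * q powr (1 - a)) powr (1 / a) * (r * q) powr (1 - 1 / a))"
    using assms by (simp add: ln_mult ln_powr field_simps)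
  then show ?thesis using \<open>0 < w\<close> \<open>0 < r\<close> assms by simp
qed (use assms in auto)

section \<open>The optimal input distribution for a fixed output distribution\<close>

locale channel =
  fixes a :: real and pX :: "'x::finite \<Rightarrow> real" and W :: "'x \<Rightarrow> 'y::finite \<Rightarrow> real"
  assumes pX: "is_dist pX" and W: "\<And>x. is_dist (W x)" and a_pos: "0 < a"
begin

lemma pX_nonneg: "0 \<le> pX x"
  using is_dist_nonneg[OF pX] .

lemma W_nonneg: "0 \<le> W x y"
  using is_dist_nonneg[OF W] .

lemma ex_pX_pos: "\<exists>x. 0 < pX x"
  using is_dist_sum[OF pX] pX_nonneg by (metis less_eq_real_def sum.neutral zero_neq_one)

lemma ex_W_pos: "\<exists>y. 0 < W x y"
  using is_dist_sum[OF W] W_nonneg by (metis less_eq_real_def sum.neutral zero_neq_one)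

definition pXY :: "'x \<times> 'y \<Rightarrow> real" where
  "pXY = (\<lambda>(x, y). pX x * W x y)"

definition g :: "('y \<Rightarrow> real) \<Rightarrow> 'x \<Rightarrow> real" where
  "g qY x = (\<Sum>y\<in>UNIV. W x y powr a * qY y powr (1 - a))"

definition Phi :: "('y \<Rightarrow> real) \<Rightarrow> real" where
  "Phi qY = (\<Sum>x\<in>UNIV. pX x * g qY x powr (1 / a))"

text \<open>The minimum over qX of the Renyi divergence of pXY from qX qY; it is attained at qbX qY.\<close>
definition renyi_min :: "('y \<Rightarrow> real) \<Rightarrow> real" where
  "renyi_min qY = a / (a - 1) * ln (Phi qY)"

definition qbX :: "('y \<Rightarrow> real) \<Rightarrow> 'x \<Rightarrow> real" where
  "qbX qY x = pX x * g qY x powr (1 / a) / Phi qY"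

definition qbYX :: "('y \<Rightarrow> real) \<Rightarrow> 'x \<Rightarrow> 'y \<Rightarrow> real" where
  "qbYX qY x y = W x y powr a * qY y powr (1 - a) / g qY x"

definition qbar :: "('y \<Rightarrow> real) \<Rightarrow> 'x \<times> 'y \<Rightarrow> real" where
  "qbar qY = (\<lambda>(x, y). qbX qY x * qbYX qY x y)"

definition covers :: "('y \<Rightarrow> real) \<Rightarrow> bool" where
  "covers qY \<longleftrightarrow> (\<forall>x y. 0 < pX x \<longrightarrow> 0 < W x y \<longrightarrow> 0 < qY y)"

lemma coversD: "covers qY \<Longrightarrow> 0 < pX x \<Longrightarrow> 0 < W x y \<Longrightarrow> 0 < qY y"
  unfolding covers_def by blast

lemma step_i_eq_qbar: "step_i a pX W q = qbar (margY q)"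
  by (simp add: step_i_def qbar_def qbX_def qbYX_def g_def Phi_def Let_def)

lemma I_LP_eq: "I_LP a pX W = (INF qX\<in>{q. is_dist q}. INF qY\<in>{q. is_dist q}. renyi_div a pXY (\<lambda>(x, y). qX x * qY y))"
  by (simp add: I_LP_def pXY_def)

lemma g_nonneg: "0 \<le> g qY x"
  by (simp add: g_def sum_nonneg)

lemma g_pos:
  assumes "covers qY" "0 < pX x" shows "0 < g qY x"
proof -
  obtain y where y: "0 < W x y" using ex_W_pos by blast
  then have "0 < W x y powr a * qY y powr (1 - a)" using coversD[OF assms y] by simp
  also have "\<dots> \<le> g qY x" unfolding g_def by (rule member_le_sum) auto
  finally show ?thesis .
qed

lemma Phi_nonneg: "0 \<le> Phi qY"
  by (simp add: Phi_def sum_nonneg pX_nonneg)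

lemma Phi_pos:
  assumes "covers qY" shows "0 < Phi qY"
proof -
  obtain x where x: "0 < pX x" using ex_pX_pos by blast
  then have "0 < pX x * g qY x powr (1 / a)" using g_pos[OF assms x] by simp
  also have "\<dots> \<le> Phi qY" unfolding Phi_def by (rule member_le_sum) (auto simp: pX_nonneg)
  finally show ?thesis .
qed

lemma qbX_nonneg: "0 \<le> qbX qY x"
  by (simp add: qbX_def pX_nonneg Phi_nonneg)

lemma sum_qbX: "0 < Phi qY \<Longrightarrow> (\<Sum>x\<in>UNIV. qbX qY x) = 1"
  by (simp add: qbX_def sum_divide_distrib[symmetric] Phi_def[symmetric])

lemma qbYX_nonneg: "0 \<le> qbYX qY x y"
  by (simp add: qbYX_def g_nonneg)

lemma sum_qbYX: "(\<Sum>y\<in>UNIV. qbYX qY x y) = g qY x / g qY x"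
  by (simp add: qbYX_def g_def sum_divide_distrib[symmetric])

lemma qbar_nonneg: "0 \<le> qbar qY z"
  by (simp add: qbar_def qbX_nonneg qbYX_nonneg split_beta)

lemma margX_qbar: "margX (qbar qY) x = qbX qY x"
proof -
  have "margX (qbar qY) x = qbX qY x * (g qY x / g qY x)"
    unfolding margX_def qbar_def by (simp add: sum_distrib_left[symmetric] sum_qbYX)
  then show ?thesis by (cases "g qY x = 0") (auto simp: qbX_def)
qed

lemma sum_qbar: "0 < Phi qY \<Longrightarrow> (\<Sum>z\<in>UNIV. qbar qY z) = 1"
  using sum_margX[of "qbar qY"] by (simp add: margX_qbar sum_qbX)

lemma qbar_pos_imp:
  assumes "0 < qbar qY (x, y)"
  shows "0 < pX x \<and> 0 < W x y \<and> qY y \<noteq> 0 \<and> 0 < g qY x \<and> 0 < Phi qY"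
  using assms g_nonneg[of qY x] Phi_nonneg[of qY] pX_nonneg[of x] W_nonneg[of x y]
  by (auto simp: qbar_def qbX_def qbYX_def order.strict_iff_order)

lemma qbar_posI:
  assumes "covers qY" "0 < pX x" "0 < W x y" shows "0 < qbar qY (x, y)"
  using g_pos[OF assms(1,2)] Phi_pos[OF assms(1)] coversD[OF assms] assms
  by (simp add: qbar_def qbX_def qbYX_def)

lemma covers_margY_qbar: "covers qY \<Longrightarrow> covers (margY (qbar qY))"
  using qbar_posI le_margY[of "qbar qY", OF qbar_nonneg] unfolding covers_def
  by (blast intro: order.strict_trans2)

lemma is_dist_margY_qbar: "0 < Phi qY \<Longrightarrow> is_dist (margY (qbar qY))"
  by (simp add: is_dist_def margY_nonneg qbar_nonneg sum_margY sum_qbar)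

lemma ln_qbX:
  assumes "0 < pX x" "0 < g qY x" "0 < Phi qY"
  shows "ln (qbX qY x) = ln (pX x) + ln (g qY x) / a - ln (Phi qY)"
  using assms by (simp add: qbX_def ln_div ln_mult)

lemma ln_qbYX:
  assumes "0 < W x y" "0 < qY y" "0 < g qY x"
  shows "ln (qbYX qY x y) = a * ln (W x y) + (1 - a) * ln (qY y) - ln (g qY x)"
  using assms by (simp add: qbYX_def ln_div ln_mult)

lemma pXY_nonneg: "0 \<le> pXY z"
  by (simp add: pXY_def split_beta pX_nonneg W_nonneg)

lemma renyi_sum_product:
  assumes "\<And>x. 0 \<le> qX x" "\<And>y. 0 \<le> qY y"
  shows "(\<Sum>z\<in>{z. pXY z > 0}. pXY z powr a * ((\<lambda>(x, y). qX x * qY y) z) powr (1 - a))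
       = (\<Sum>x\<in>UNIV. pX x powr a * qX x powr (1 - a) * g qY x)"
proof -
  have "(\<Sum>z\<in>{z. pXY z > 0}. pXY z powr a * ((\<lambda>(x, y). qX x * qY y) z) powr (1 - a))
      = (\<Sum>z\<in>UNIV. pXY z powr a * ((\<lambda>(x, y). qX x * qY y) z) powr (1 - a))"
  proof (rule sum.mono_neutral_left)
    have "pXY z = 0" if "\<not> 0 < pXY z" for z
      using that pXY_nonneg[of z] by simp
    then show "\<forall>z\<in>UNIV - {z. 0 < pXY z}. pXY z powr a * ((\<lambda>(x, y). qX x * qY y) z) powr (1 - a) = 0"
      by simp
  qed auto
  also have "\<dots> = (\<Sum>x\<in>UNIV. \<Sum>y\<in>UNIV. pX x powr a * qX x powr (1 - a) * (W x y powr a * qY y powr (1 - a)))"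
    unfolding sum_UNIV_prod pXY_def using assms pX_nonneg W_nonneg
    by (simp add: powr_mult mult_ac)
  finally show ?thesis by (simp add: g_def sum_distrib_left)
qed

lemma renyi_term_qbX:
  assumes "covers qY"
  shows "pX x powr a * qbX qY x powr (1 - a) * g qY x = Phi qY powr (a - 1) * (pX x * g qY x powr (1 / a))"
proof (cases "pX x = 0")
  case False
  then have p: "0 < pX x" using pX_nonneg[of x] by simp
  have pos: "0 < g qY x" "0 < Phi qY" "0 < qbX qY x"
    using g_pos[OF assms p] Phi_pos[OF assms] p by (simp_all add: qbX_def)
  have "ln (pX x powr a * qbX qY x powr (1 - a) * g qY x)
      = ln (Phi qY powr (a - 1) * (pX x * g qY x powr (1 / a)))"
    using p pos a_pos by (simp add: ln_mult ln_qbX[OF p pos(1,2)] field_simps)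
  then show ?thesis using p pos by simp
qed (simp add: qbX_def)

lemma renyi_div_qbX:
  assumes "is_dist qY" "covers qY"
  shows "renyi_div a pXY (\<lambda>(x, y). qbX qY x * qY y) = ereal (renyi_min qY)"
proof -
  have Phi: "0 < Phi qY" using Phi_pos[OF assms(2)] .
  have "(\<Sum>z\<in>{z. pXY z > 0}. pXY z powr a * ((\<lambda>(x, y). qbX qY x * qY y) z) powr (1 - a))
      = (\<Sum>x\<in>UNIV. Phi qY powr (a - 1) * (pX x * g qY x powr (1 / a)))"
    using is_dist_nonneg[OF assms(1)]
    by (simp add: renyi_sum_product qbX_nonneg renyi_term_qbX[OF assms(2)])
  also have "\<dots> = Phi qY powr (a - 1) * Phi qY" by (simp add: Phi_def sum_distrib_left)
  also have "\<dots> = Phi qY powr a" using Phi by (simp add: powr_diff)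
  finally have sum: "(\<Sum>z\<in>{z. pXY z > 0}. pXY z powr a * ((\<lambda>(x, y). qbX qY x * qY y) z) powr (1 - a))
      = Phi qY powr a" .
  have pos: "0 < qbX qY x * qY y" if "0 < pXY (x, y)" for x y
  proof -
    have xy: "0 < pX x" "0 < W x y"
      using that pX_nonneg[of x] W_nonneg[of x y] by (auto simp: pXY_def zero_less_mult_iff)
    then show ?thesis using g_pos[OF assms(2) xy(1)] Phi coversD[OF assms(2) xy] by (simp add: qbX_def)
  qed
  then have "\<not> (\<exists>z. 0 < pXY z \<and> (\<lambda>(x, y). qbX qY x * qY y) z = 0)"
    by (fastforce simp: split_beta)
  then show ?thesis
    unfolding renyi_div_def using sum Phi by (auto simp: renyi_min_def Let_def)
qed

lemma I_LP_le_renyi_min: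
  assumes "is_dist qY" "covers qY"
  shows "I_LP a pX W \<le> ereal (renyi_min qY)"
proof -
  have "is_dist (qbX qY)"
    using sum_qbX[OF Phi_pos[OF assms(2)]] by (simp add: is_dist_def qbX_nonneg)
  then have "I_LP a pX W \<le> renyi_div a pXY (\<lambda>(x, y). qbX qY x * qY y)"
    unfolding I_LP_eq using assms(1) by (blast intro: INF_lower2)
  then show ?thesis using renyi_div_qbX[OF assms] by simp
qed

end

section \<open>Orders in [1/2, 1)\<close>

locale channel_lt1 = channel a pX W
  for a and pX :: "'x::finite \<Rightarrow> real" and W :: "'x \<Rightarrow> 'y::finite \<Rightarrow> real" +
  assumes a_ge_half: "1 / 2 \<le> a" and a_lt_1: "a < 1"
begin

lemma renyi_min_le_renyi_div:
  assumes qX: "is_dist qX" and qY: "is_dist qY"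
    and fin: "renyi_div a pXY (\<lambda>(x, y). qX x * qY y) \<noteq> \<infinity>"
  shows "0 < Phi qY \<and> ereal (renyi_min qY) \<le> renyi_div a pXY (\<lambda>(x, y). qX x * qY y)"
proof -
  define s where "s = (\<Sum>z\<in>{z. pXY z > 0}. pXY z powr a * ((\<lambda>(x, y). qX x * qY y) z) powr (1 - a))"
  have renyi: "renyi_div a pXY (\<lambda>(x, y). qX x * qY y) = (if s = 0 then \<infinity> else ereal (1 / (a - 1) * ln s))"
    unfolding renyi_div_def s_def using a_lt_1 by (simp add: Let_def)
  have "s = (\<Sum>x\<in>UNIV. qX x powr (1 - a) * (pX x * g qY x powr (1 / a)) powr (1 - (1 - a)))"
    unfolding s_def using is_dist_nonneg[OF qX] is_dist_nonneg[OF qY] a_pos g_nonneg pX_nonneg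
    by (simp add: renyi_sum_product powr_mult powr_powr mult_ac)
  also have "\<dots> \<le> (\<Sum>x\<in>UNIV. qX x) powr (1 - a) * (\<Sum>x\<in>UNIV. pX x * g qY x powr (1 / a)) powr (1 - (1 - a))"
    using is_dist_nonneg[OF qX] a_pos a_lt_1
    by (intro Holder_inequality_sum) (auto simp: pX_nonneg)
  also have "\<dots> = Phi qY powr a" by (simp add: is_dist_sum[OF qX] Phi_def)
  finally have s_le: "s \<le> Phi qY powr a" .
  have "s \<noteq> 0" using fin renyi by auto
  moreover have "0 \<le> s" unfolding s_def by (intro sum_nonneg) simp
  ultimately have s_pos: "0 < s" by simp
  then have Phi: "0 < Phi qY" using s_le Phi_nonneg[of qY] by (cases "Phi qY = 0") auto
  have "ln s \<le> ln (Phi qY powr a)" using s_le s_pos Phi by (subst ln_le_cancel_iff) auto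
  also have "\<dots> = a * ln (Phi qY)" using Phi by simp
  finally have "1 / (a - 1) * (a * ln (Phi qY)) \<le> 1 / (a - 1) * ln s"
    using a_lt_1 by (intro mult_left_mono_neg) auto
  then show ?thesis using Phi renyi s_pos by (simp add: renyi_min_def)
qed

lemma F_LP_integrand_qbar:
  assumes "covers qY" "0 < qbar qY (x, y)"
  shows "a / (1 - a) * ln (qbar qY (x, y) / (qbX qY x * W x y))
       + ln (qbar qY (x, y) / (qbX qY x * qY y)) + a / (1 - a) * ln (qbX qY x / pX x) = renyi_min qY"
proof -
  have pos: "0 < pX x" "0 < W x y" "0 < qY y" "0 < g qY x" "0 < Phi qY"
    using qbar_pos_imp[OF assms(2)] coversD[OF assms(1)] by auto
  then have "0 < qbX qY x" "0 < qbYX qY x y" by (simp_all add: qbX_def qbYX_def)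
  then have "a / (1 - a) * ln (qbar qY (x, y) / (qbX qY x * W x y))
       + ln (qbar qY (x, y) / (qbX qY x * qY y)) + a / (1 - a) * ln (qbX qY x / pX x)
     = a / (1 - a) * (ln (qbYX qY x y) - ln (W x y)) + (ln (qbYX qY x y) - ln (qY y))
       + a / (1 - a) * (ln (qbX qY x) - ln (pX x))"
    using pos by (simp add: qbar_def ln_div)
  also have "\<dots> = renyi_min qY"
    using a_pos a_lt_1 unfolding ln_qbX[OF pos(1,4,5)] ln_qbYX[OF pos(2,3,4)] renyi_min_def
    by (simp add: divide_simps) (simp add: algebra_simps)
  finally show ?thesis .
qed

lemma F_LP_qbar:
  assumes "is_dist qY" "covers qY"
  shows "F_LP a pX W (qbar qY) qY = ereal (renyi_min qY)"
proof -
  define T where "T = qbar qY"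
  define c where "c = a / (1 - a)"
  have T: "0 \<le> T z" for z by (simp add: T_def qbar_nonneg)
  have pos: "0 < W (fst z) (snd z) \<and> 0 < qY (snd z) \<and> 0 < qbX qY (fst z)" if "0 < T z" for z
    using qbar_pos_imp[of qY "fst z" "snd z"] that coversD[OF assms(2)]
    by (auto simp: T_def qbX_def)
  have mT: "margX T = qbX qY" by (rule ext) (simp add: T_def margX_qbar)
  have "KL T (\<lambda>(x, y). margX T x * W x y) = ereal (rel_entropy T (\<lambda>(x, y). qbX qY x * W x y))"
    unfolding mT using T by (intro KL_eq_rel_entropy) (auto simp: split_beta dest!: pos)
  moreover have "KL T (\<lambda>(x, y). margX T x * qY y) = ereal (rel_entropy T (\<lambda>(x, y). qbX qY x * qY y))"
    unfolding mT using T by (intro KL_eq_rel_entropy) (auto simp: split_beta dest!: pos)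
  moreover have "KL (margX T) pX = ereal (rel_entropy (qbX qY) pX)"
    unfolding mT by (intro KL_eq_rel_entropy qbX_nonneg) (auto simp: qbX_def)
  moreover have "rel_entropy (qbX qY) pX = (\<Sum>z\<in>UNIV. T z * ln (qbX qY (fst z) / pX (fst z)))"
    using sum_mult_fst_eq_margX[of T "\<lambda>x. ln (qbX qY x / pX x)"] by (simp add: rel_entropy_def mT)
  moreover have "c * rel_entropy T (\<lambda>(x, y). qbX qY x * W x y) + rel_entropy T (\<lambda>(x, y). qbX qY x * qY y)
      + c * (\<Sum>z\<in>UNIV. T z * ln (qbX qY (fst z) / pX (fst z))) = renyi_min qY"
  proof -
    have "renyi_min qY = (\<Sum>z\<in>UNIV. T z * renyi_min qY)"
      using sum_qbar[OF Phi_pos[OF assms(2)]] by (simp add: T_def sum_distrib_right[symmetric])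
    also have "\<dots> = (\<Sum>z\<in>UNIV. T z * (c * ln (T z / (qbX qY (fst z) * W (fst z) (snd z)))
           + ln (T z / (qbX qY (fst z) * qY (snd z))) + c * ln (qbX qY (fst z) / pX (fst z))))"
      using F_LP_integrand_qbar[OF assms(2)] T
      by (intro sum_mult_cong_nonzero) (force simp: T_def c_def order.strict_iff_order)
    also have "\<dots> = c * rel_entropy T (\<lambda>(x, y). qbX qY x * W x y) + rel_entropy T (\<lambda>(x, y). qbX qY x * qY y)
        + c * (\<Sum>z\<in>UNIV. T z * ln (qbX qY (fst z) / pX (fst z)))"
      by (simp add: rel_entropy_def split_beta sum.distrib sum_distrib_left algebra_simps)
    finally show ?thesis ..
  qed
  ultimately show ?thesis unfolding F_LP_def T_def[symmetric] mT by (simp add: c_def)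
qed

lemma ln_qbar_ratio:
  assumes qY: "covers qY" and qS: "\<And>y. 0 \<le> qS y" and pos: "0 < qbar qS (x, y)"
  shows "a / (1 - a) * ln (qbar qS (x, y) / qbar qY (x, y)) + ln (qbYX qS x y / qbYX qY x y)
       = ln (qS y / qY y) - a / (1 - a) * ln (Phi qS / Phi qY)"
proof -
  have S: "0 < pX x" "0 < W x y" "0 < qS y" "0 < g qS x" "0 < Phi qS"
    using qbar_pos_imp[OF pos] qS[of y] by auto
  have Y: "0 < qY y" "0 < g qY x" "0 < Phi qY"
    using coversD[OF qY S(1,2)] g_pos[OF qY S(1)] Phi_pos[OF qY] by auto
  have "0 < qbX qS x" "0 < qbX qY x" "0 < qbYX qS x y" "0 < qbYX qY x y"
    using S Y by (simp_all add: qbX_def qbYX_def)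
  then have "a / (1 - a) * ln (qbar qS (x, y) / qbar qY (x, y)) + ln (qbYX qS x y / qbYX qY x y)
      = a / (1 - a) * (ln (qbX qS x) - ln (qbX qY x) + ln (qbYX qS x y) - ln (qbYX qY x y))
        + (ln (qbYX qS x y) - ln (qbYX qY x y))"
    by (simp add: qbar_def ln_div ln_mult)
  also have "\<dots> = ln (qS y / qY y) - a / (1 - a) * ln (Phi qS / Phi qY)"
    using a_pos a_lt_1 S Y
    unfolding ln_qbX[OF S(1,4,5)] ln_qbX[OF S(1) Y(2,3)] ln_qbYX[OF S(2,3,4)] ln_qbYX[OF S(2) Y(1,2)]
    by (simp add: ln_div divide_simps) (simp add: algebra_simps)
  finally show ?thesis .
qed

lemma sum_ln_qbYX_ratio_nonneg:
  assumes qY: "covers qY" and qS: "is_dist qS" "0 < Phi qS"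
  shows "0 \<le> (\<Sum>z\<in>UNIV. qbar qS z * ln (qbYX qS (fst z) (snd z) / qbYX qY (fst z) (snd z)))"
proof -
  define s where "s = (\<lambda>(x, y). qbX qS x * qbYX qY x y)"
  have pos: "0 < qbX qS (fst z) \<and> 0 < s z" if "0 < qbar qS z" for z
  proof -
    obtain x y where z: "z = (x, y)" by (cases z)
    then have S: "0 < pX x" "0 < W x y" "0 < g qS x" "0 < Phi qS"
      using qbar_pos_imp[of qS x y] that by auto
    then show ?thesis
      using g_pos[OF qY S(1)] Phi_pos[OF qY] coversD[OF qY S(1,2)] z by (simp add: s_def qbX_def qbYX_def)
  qed
  have "sum s UNIV = (\<Sum>x\<in>UNIV. qbX qS x * (\<Sum>y\<in>UNIV. qbYX qY x y))"
    by (simp add: s_def sum_UNIV_prod sum_distrib_left)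
  also have "\<dots> \<le> (\<Sum>x\<in>UNIV. qbX qS x * 1)"
    by (intro sum_mono mult_left_mono qbX_nonneg) (simp add: sum_qbYX)
  also have "\<dots> = sum (qbar qS) UNIV" by (simp add: sum_qbX sum_qbar qS)
  finally have "0 \<le> rel_entropy (qbar qS) s"
    using pos by (intro rel_entropy_nonneg) (auto simp: qbar_nonneg s_def qbX_nonneg qbYX_nonneg)
  also have "rel_entropy (qbar qS) s
      = (\<Sum>z\<in>UNIV. qbar qS z * ln (qbYX qS (fst z) (snd z) / qbYX qY (fst z) (snd z)))"
    unfolding rel_entropy_def using pos qbar_nonneg
    by (intro sum_mult_cong_nonzero) (auto simp: s_def qbar_def split_beta order.strict_iff_order)
  finally show ?thesis .
qed

lemma rel_entropy_margY_qbar_nonneg: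
  assumes "0 < Phi qS" "is_dist q" "\<And>x y. 0 < qbar qS (x, y) \<Longrightarrow> 0 < q y"
  shows "0 \<le> rel_entropy (margY (qbar qS)) q"
proof (rule rel_entropy_nonneg)
  show "0 < q y" if "0 < margY (qbar qS) y" for y
    using margY_pos_imp_ex[OF that] assms(3) by blast
qed (use assms in \<open>auto simp: margY_nonneg qbar_nonneg is_dist_nonneg is_dist_sum sum_margY sum_qbar\<close>)

lemma renyi_min_three_point:
  assumes qY: "is_dist qY" "covers qY" and qS: "is_dist qS" "0 < Phi qS"
  defines "u \<equiv> margY (qbar qS)"
  shows "renyi_min qY - renyi_min qS \<le> rel_entropy u qY - rel_entropy u (margY (qbar qY))"
proof -
  define c t T where "c = a / (1 - a)" and "t = qbar qS" and "T = qbar qY"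
  \<comment> \<open>the only use of a >= 1/2\<close>
  have c: "1 \<le> c" using a_ge_half a_lt_1 by (simp add: c_def field_simps)
  have t: "0 \<le> t z" for z by (simp add: t_def qbar_nonneg)
  have pos: "0 < T z \<and> 0 < qS (snd z) \<and> 0 < qY (snd z)" if "0 < t z" for z
  proof -
    obtain x y where z: "z = (x, y)" by (cases z)
    then have xy: "0 < pX x" "0 < W x y" "qS y \<noteq> 0" using qbar_pos_imp[of qS x y] that by (auto simp: t_def)
    then show ?thesis using qbar_posI[OF qY(2) xy(1,2)] coversD[OF qY(2) xy(1,2)]
        is_dist_nonneg[OF qS(1), of y] z by (simp add: T_def)
  qed
  have "c * rel_entropy t T + (\<Sum>z\<in>UNIV. t z * ln (qbYX qS (fst z) (snd z) / qbYX qY (fst z) (snd z)))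
      = (\<Sum>z\<in>UNIV. t z * (ln (qS (snd z) / qY (snd z)) - c * ln (Phi qS / Phi qY)))"
    unfolding rel_entropy_def sum_distrib_left sum.distrib[symmetric] mult.left_commute[of c]
      distrib_left[symmetric]
    using ln_qbar_ratio[OF qY(2) is_dist_nonneg[OF qS(1)]] t
    by (intro sum_mult_cong_nonzero) (force simp: t_def T_def c_def order.strict_iff_order)
  also have "\<dots> = (\<Sum>z\<in>UNIV. t z * ln (qS (snd z) / qY (snd z))) - c * ln (Phi qS / Phi qY)"
    using sum_qbar[OF qS(2)] by (simp add: t_def right_diff_distrib sum_subtractf sum_distrib_right[symmetric])
  also have "(\<Sum>z\<in>UNIV. t z * ln (qS (snd z) / qY (snd z))) = rel_entropy u qY - rel_entropy u qS"
    unfolding u_def t_def using pos by (intro sum_ln_ratio_eq_rel_entropy_diff qbar_nonneg) (force simp: t_def)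
  finally have identity: "c * ln (Phi qS / Phi qY) = rel_entropy u qY - rel_entropy u qS - c * rel_entropy t T
      - (\<Sum>z\<in>UNIV. t z * ln (qbYX qS (fst z) (snd z) / qbYX qY (fst z) (snd z)))"
    by linarith
  have dp: "rel_entropy u (margY T) \<le> rel_entropy t T"
    unfolding u_def t_def T_def using pos by (intro rel_entropy_margY_le qbar_nonneg) (auto simp: t_def T_def)
  have "0 \<le> rel_entropy u (margY T)"
    unfolding u_def T_def
    by (intro rel_entropy_margY_qbar_nonneg qS(2) is_dist_margY_qbar Phi_pos qY(2))
       (use pos in \<open>auto simp: t_def T_def intro: order.strict_trans2 le_margY qbar_nonneg\<close>)
  then have "rel_entropy u (margY T) \<le> c * rel_entropy u (margY T)"
    using mult_right_mono[OF c] by simp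
  also have "\<dots> \<le> c * rel_entropy t T" using dp c by (intro mult_left_mono) auto
  finally have "rel_entropy u (margY T) \<le> c * rel_entropy t T" .
  moreover have "0 \<le> rel_entropy u qS"
    unfolding u_def using pos by (intro rel_entropy_margY_qbar_nonneg qS) (force simp: t_def)
  moreover have "renyi_min qY - renyi_min qS = c * ln (Phi qS / Phi qY)"
    using Phi_pos[OF qY(2)] qS(2) a_lt_1
    by (simp add: renyi_min_def c_def ln_div divide_simps) (simp add: algebra_simps)
  ultimately show ?thesis
    using identity sum_ln_qbYX_ratio_nonneg[OF qY(2) qS] by (simp add: T_def t_def)
qed

lemma renyi_min_qbar_le:
  assumes "is_dist qY" "covers qY"
  shows "renyi_min (margY (qbar qY)) \<le> renyi_min qY"
proof -
  define q' where "q' = margY (qbar qY)"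
  have q': "is_dist q'" "covers q'"
    using is_dist_margY_qbar[OF Phi_pos] covers_margY_qbar assms by (simp_all add: q'_def)
  have "0 \<le> rel_entropy q' (margY (qbar q'))"
    unfolding q'_def
  proof (rule rel_entropy_margY_qbar_nonneg[OF Phi_pos[OF assms(2)]])
    show "is_dist (margY (qbar (margY (qbar qY))))"
      using is_dist_margY_qbar[OF Phi_pos[OF q'(2)]] by (simp add: q'_def)
    show "0 < margY (qbar (margY (qbar qY))) y" if "0 < qbar qY (x, y)" for x y
      using qbar_pos_imp[OF that] qbar_posI[OF q'(2)] margY_pos[of "qbar q'", OF qbar_nonneg]
      unfolding q'_def by blast
  qed
  then show ?thesis
    using renyi_min_three_point[OF q' assms(1) Phi_pos[OF assms(2)]] by (simp add: q'_def rel_entropy_self)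
qed

lemma step_i_iterates_dist_covers:
  assumes "is_dist q0" "\<And>z. 0 < q0 z"
  shows "is_dist (margY ((step_i a pX W ^^ k) q0)) \<and> covers (margY ((step_i a pX W ^^ k) q0))"
proof (induction k)
  case 0
  have "covers (margY q0)"
    unfolding covers_def using assms(2) le_margY[of q0] by (metis less_imp_le order.strict_trans2)
  then show ?case using is_dist_margY[OF assms(1)] by simp
next
  case (Suc k)
  then show ?case using is_dist_margY_qbar[OF Phi_pos] covers_margY_qbar by (simp add: step_i_eq_qbar)
qed

theorem F_LP_step_i_tendsto_I_LP:
  assumes q0: "is_dist q0" "\<And>z. 0 < q0 z"
  shows "(\<lambda>k. F_LP a pX W ((step_i a pX W ^^ Suc k) q0) (margY ((step_i a pX W ^^ k) q0)))
           \<longlonglongrightarrow> I_LP a pX W"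
proof -
  define qs where "qs k = margY ((step_i a pX W ^^ k) q0)" for k
  have qs: "is_dist (qs k)" "covers (qs k)" for k using step_i_iterates_dist_covers[OF q0] by (simp_all add: qs_def)
  have qs_Suc: "qs (Suc k) = margY (qbar (qs k))" for k by (simp add: qs_def step_i_eq_qbar)
  have "(\<lambda>k. ereal (renyi_min (qs k))) \<longlonglongrightarrow> I_LP a pX W"
  proof (rule tendsto_ereal_from_rate_bounds)
    show "I_LP a pX W \<le> ereal (renyi_min (qs k))" for k using I_LP_le_renyi_min qs by blast
  next
    fix y assume "I_LP a pX W < y"
    then obtain qX qY where qXY: "is_dist qX" "is_dist qY" "renyi_div a pXY (\<lambda>(x, y). qX x * qY y) < y"
      unfolding I_LP_eq by (auto simp: INF_less_iff)
    then have "renyi_div a pXY (\<lambda>(x, y). qX x * qY y) \<noteq> \<infinity>" by auto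
    then have Phi: "0 < Phi qY" and "ereal (renyi_min qY) < y"
      using renyi_min_le_renyi_div[OF qXY(1,2)] qXY(3) by auto
    moreover have "(real N + 1) * (renyi_min (qs N) - renyi_min qY) \<le> rel_entropy (margY (qbar qY)) (qs 0)" for N
    proof (rule telescoping_rate_bound)
      show "renyi_min (qs k) - renyi_min qY
          \<le> rel_entropy (margY (qbar qY)) (qs k) - rel_entropy (margY (qbar qY)) (qs (Suc k))" for k
        using renyi_min_three_point[OF qs qXY(2) Phi] by (simp add: qs_Suc)
      show "0 \<le> rel_entropy (margY (qbar qY)) (qs k)" for k
        using qs qbar_pos_imp coversD by (intro rel_entropy_margY_qbar_nonneg Phi) blast+
      show "renyi_min (qs (Suc k)) \<le> renyi_min (qs k)" for k
        using renyi_min_qbar_le[OF qs] by (simp add: qs_Suc)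
    qed
    ultimately show "\<exists>c B. ereal c < y \<and> (\<forall>N. (real N + 1) * (renyi_min (qs N) - c) \<le> B)"
      by blast
  qed
  then show ?thesis using F_LP_qbar[OF qs] by (simp add: qs_def step_i_eq_qbar)
qed

end

section \<open>Orders greater than 1\<close>

locale channel_gt1 = channel a pX W
  for a and pX :: "'x::finite \<Rightarrow> real" and W :: "'x \<Rightarrow> 'y::finite \<Rightarrow> real" +
  assumes a_gt_1: "1 < a"
begin

definition hmass :: "('x \<Rightarrow> 'y \<Rightarrow> real) \<Rightarrow> 'x \<Rightarrow> real" where
  "hmass r x = (\<Sum>y\<in>UNIV. W x y * r x y powr (1 - 1 / a))"

definition Z :: "('x \<Rightarrow> 'y \<Rightarrow> real) \<Rightarrow> real" where
  "Z r = (\<Sum>x\<in>UNIV. pX x powr (a / (2 * a - 1)) * hmass r x powr (a / (2 * a - 1)))"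

definition H :: "('x \<Rightarrow> 'y \<Rightarrow> real) \<Rightarrow> real" where
  "H r = (2 * a - 1) / (a - 1) * ln (Z r)"

definition qhX :: "('x \<Rightarrow> 'y \<Rightarrow> real) \<Rightarrow> 'x \<Rightarrow> real" where
  "qhX r x = pX x powr (a / (2 * a - 1)) * hmass r x powr (a / (2 * a - 1)) / Z r"

definition qhYX :: "('x \<Rightarrow> 'y \<Rightarrow> real) \<Rightarrow> 'x \<Rightarrow> 'y \<Rightarrow> real" where
  "qhYX r x y = W x y * r x y powr (1 - 1 / a) / hmass r x"

definition qhat :: "('x \<Rightarrow> 'y \<Rightarrow> real) \<Rightarrow> 'x \<times> 'y \<Rightarrow> real" where
  "qhat r = (\<lambda>(x, y). qhX r x * qhYX r x y)"

text \<open>Columns may sum to less than 1: rev_chan q has a zero column wherever margY q vanishes.\<close>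
definition rev_channel :: "('x \<Rightarrow> 'y \<Rightarrow> real) \<Rightarrow> bool" where
  "rev_channel r \<longleftrightarrow> (\<forall>x y. 0 \<le> r x y) \<and> (\<forall>y. (\<Sum>x\<in>UNIV. r x y) \<le> 1)
     \<and> (\<forall>x y. 0 < pX x \<longrightarrow> 0 < W x y \<longrightarrow> 0 < r x y)"

definition Ft :: "('x \<times> 'y \<Rightarrow> real) \<Rightarrow> ('x \<Rightarrow> 'y \<Rightarrow> real) \<Rightarrow> real" where
  "Ft q r = a / (1 - a) * rel_entropy q (\<lambda>(x, y). margX q x * W x y)
     + (\<Sum>z\<in>UNIV. q z * ln (r (fst z) (snd z) / margX q (fst z)))
     + a / (1 - a) * rel_entropy (margX q) pX"

lemma step_ii_eq_qhat: "step_ii a pX W q = qhat (rev_chan q)"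
  by (simp add: step_ii_def qhat_def qhX_def qhYX_def Z_def hmass_def Let_def)

lemma rev_channel_nonneg: "rev_channel r \<Longrightarrow> 0 \<le> r x y"
  by (simp add: rev_channel_def)

lemma rev_channel_sum_le_1: "rev_channel r \<Longrightarrow> (\<Sum>x\<in>UNIV. r x y) \<le> 1"
  by (simp add: rev_channel_def)

lemma rev_channel_le_1: "rev_channel r \<Longrightarrow> r x y \<le> 1"
  using member_le_sum[of x UNIV "\<lambda>x. r x y"] rev_channel_sum_le_1[of r y]
  by (simp add: rev_channel_nonneg)

lemma rev_channel_pos: "rev_channel r \<Longrightarrow> 0 < pX x \<Longrightarrow> 0 < W x y \<Longrightarrow> 0 < r x y"
  by (simp add: rev_channel_def)

lemma rev_channel_rev_chan:
  assumes "\<And>z. 0 \<le> q z" "\<And>x y. 0 < pX x \<Longrightarrow> 0 < W x y \<Longrightarrow> 0 < q (x, y)"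
  shows "rev_channel (rev_chan q)"
  using assms by (simp add: rev_channel_def rev_chan_nonneg sum_rev_chan_le_1 rev_chan_pos)

lemma hmass_nonneg: "0 \<le> hmass r x"
  by (simp add: hmass_def sum_nonneg W_nonneg)

lemma hmass_le_1:
  assumes "rev_channel r" shows "hmass r x \<le> 1"
proof -
  have "hmass r x \<le> (\<Sum>y\<in>UNIV. W x y * 1)"
    unfolding hmass_def using assms a_gt_1
    by (intro sum_mono mult_left_mono powr_le1) (auto simp: W_nonneg rev_channel_nonneg rev_channel_le_1)
  then show ?thesis by (simp add: is_dist_sum[OF W])
qed

lemma hmass_pos:
  assumes "rev_channel r" "0 < pX x" shows "0 < hmass r x"
proof -
  obtain y where y: "0 < W x y" using ex_W_pos by blast
  then have "0 < W x y * r x y powr (1 - 1 / a)" using rev_channel_pos[OF assms y] by simp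
  also have "\<dots> \<le> hmass r x" unfolding hmass_def by (rule member_le_sum) (auto simp: W_nonneg)
  finally show ?thesis .
qed

lemma Z_pos:
  assumes "rev_channel r" shows "0 < Z r"
proof -
  obtain x where x: "0 < pX x" using ex_pX_pos by blast
  then have "0 < pX x powr (a / (2 * a - 1)) * hmass r x powr (a / (2 * a - 1))"
    using hmass_pos[OF assms x] by simp
  also have "\<dots> \<le> Z r" unfolding Z_def by (rule member_le_sum) auto
  finally show ?thesis .
qed

lemma Z_le_card:
  assumes "rev_channel r" shows "Z r \<le> real CARD('x)"
proof -
  have "Z r \<le> (\<Sum>x\<in>(UNIV::'x set). 1)"
    unfolding Z_def using a_gt_1
    by (intro sum_mono mult_le_one powr_le1)
       (auto simp: pX_nonneg is_dist_le_1[OF pX] hmass_nonneg hmass_le_1[OF assms])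
  then show ?thesis by simp
qed

lemma qhX_nonneg: "rev_channel r \<Longrightarrow> 0 \<le> qhX r x"
  using Z_pos by (simp add: qhX_def less_imp_le)

lemma sum_qhX: "rev_channel r \<Longrightarrow> (\<Sum>x\<in>UNIV. qhX r x) = 1"
  using Z_pos[of r] by (simp add: qhX_def sum_divide_distrib[symmetric] Z_def[symmetric])

lemma qhYX_nonneg: "rev_channel r \<Longrightarrow> 0 \<le> qhYX r x y"
  by (simp add: qhYX_def hmass_nonneg W_nonneg rev_channel_nonneg)

lemma qhat_nonneg: "rev_channel r \<Longrightarrow> 0 \<le> qhat r z"
  by (simp add: qhat_def qhX_nonneg qhYX_nonneg split_beta)

lemma margX_qhat: "margX (qhat r) x = qhX r x"
proof -
  have "margX (qhat r) x = qhX r x * (hmass r x / hmass r x)"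
    unfolding margX_def qhat_def qhYX_def
    by (simp add: sum_distrib_left[symmetric] sum_divide_distrib[symmetric] hmass_def)
  then show ?thesis using a_gt_1 by (cases "hmass r x = 0") (auto simp: qhX_def)
qed

lemma sum_qhat: "rev_channel r \<Longrightarrow> (\<Sum>z\<in>UNIV. qhat r z) = 1"
  using sum_margX[of "qhat r"] by (simp add: margX_qhat sum_qhX)

lemma is_dist_qhat: "rev_channel r \<Longrightarrow> is_dist (qhat r)"
  by (simp add: is_dist_def qhat_nonneg sum_qhat)

lemma qhat_pos_imp:
  assumes "rev_channel r" "0 < qhat r (x, y)"
  shows "0 < pX x \<and> 0 < W x y \<and> 0 < r x y"
  using assms(2) pX_nonneg[of x] W_nonneg[of x y] rev_channel_nonneg[OF assms(1), of x y]
  by (auto simp: qhat_def qhX_def qhYX_def order.strict_iff_order)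

lemma qhat_posI:
  assumes "rev_channel r" "0 < pX x" "0 < W x y" shows "0 < qhat r (x, y)"
  using hmass_pos[OF assms(1,2)] Z_pos[OF assms(1)] rev_channel_pos[OF assms] assms
  by (simp add: qhat_def qhX_def qhYX_def)

lemma qhX_pos: "rev_channel r \<Longrightarrow> 0 < pX x \<Longrightarrow> 0 < qhX r x"
  using hmass_pos[of r x] Z_pos[of r] by (simp add: qhX_def)

lemma qhYX_pos: "rev_channel r \<Longrightarrow> 0 < pX x \<Longrightarrow> 0 < W x y \<Longrightarrow> 0 < qhYX r x y"
  using hmass_pos[of r x] rev_channel_pos[of r x y] by (simp add: qhYX_def)

lemma rev_channel_next: "rev_channel r \<Longrightarrow> rev_channel (rev_chan (qhat r))"
  by (rule rev_channel_rev_chan) (auto simp: qhat_nonneg qhat_posI)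

lemma ln_qhX:
  assumes "rev_channel r" "0 < pX x"
  shows "ln (qhX r x) = a / (2 * a - 1) * (ln (pX x) + ln (hmass r x)) - ln (Z r)"
  using assms hmass_pos[OF assms] Z_pos[OF assms(1)] a_gt_1
  by (simp add: qhX_def ln_div ln_mult distrib_left)

lemma ln_qhYX:
  assumes "rev_channel r" "0 < pX x" "0 < W x y"
  shows "ln (qhYX r x y) = ln (W x y) + (1 - 1 / a) * ln (r x y) - ln (hmass r x)"
  using assms hmass_pos[OF assms(1,2)] rev_channel_pos[OF assms]
  by (simp add: qhYX_def ln_div ln_mult)

lemma Ft_LP_eq_Ft:
  assumes q: "\<And>z. 0 \<le> q z" and pos: "\<And>x y. 0 < q (x, y) \<Longrightarrow> 0 < pX x \<and> 0 < W x y \<and> 0 < r x y"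
  shows "Ft_LP a pX W q r = ereal (Ft q r)"
proof -
  have "KL q (\<lambda>(x, y). margX q x * W x y) = ereal (rel_entropy q (\<lambda>(x, y). margX q x * W x y))"
    using q pos margX_pos[of q, OF q] by (intro KL_eq_rel_entropy) (force simp: split_beta)+
  moreover have "exp_log_ratio q r = ereal (\<Sum>z\<in>UNIV. q z * ln (r (fst z) (snd z) / margX q (fst z)))"
    using pos sum_support_eq_sum_UNIV[of q "\<lambda>z. ln (r (fst z) (snd z) / margX q (fst z))", OF q]
    by (force simp: exp_log_ratio_def)
  moreover have "KL (margX q) pX = ereal (rel_entropy (margX q) pX)"
    using pos margX_pos_imp_ex[of q] by (intro KL_eq_rel_entropy margX_nonneg q) force
  ultimately show ?thesis by (simp add: Ft_LP_def Ft_def)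
qed

lemma Ft_integrand_identity:
  assumes r: "rev_channel r" and pos: "0 < pX x" "0 < W x y" "0 < v" "0 < m"
  shows "a / (1 - a) * ln (v / (m * W x y)) + ln (r x y / m) + a / (1 - a) * ln (m / pX x)
       + a / (a - 1) * ln (v / qhat r (x, y)) + ln (m / qhX r x) = H r"
proof -
  have "0 < r x y" "0 < qhX r x" "0 < qhYX r x y"
    using rev_channel_pos[OF r pos(1,2)] qhX_pos[OF r pos(1)] qhYX_pos[OF r pos(1,2)] .
  then have "a / (1 - a) * ln (v / (m * W x y)) + ln (r x y / m) + a / (1 - a) * ln (m / pX x)
       + a / (a - 1) * ln (v / qhat r (x, y)) + ln (m / qhX r x)
     = a / (1 - a) * (ln v - ln m - ln (W x y)) + (ln (r x y) - ln m) + a / (1 - a) * (ln m - ln (pX x))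
       + a / (a - 1) * (ln v - ln (qhX r x) - ln (qhYX r x y)) + (ln m - ln (qhX r x))"
    using pos by (simp add: qhat_def ln_div ln_mult diff_diff_eq)
  also have "\<dots> = H r"
    using a_gt_1 unfolding ln_qhX[OF r pos(1)] ln_qhYX[OF r pos(1,2)] H_def
    by (simp add: divide_simps) (simp add: algebra_simps)
  finally show ?thesis .
qed

lemma Ft_compensation:
  assumes r: "rev_channel r" and q: "\<And>z. 0 \<le> q z" "sum q UNIV = 1"
    and pos: "\<And>x y. 0 < q (x, y) \<Longrightarrow> 0 < pX x \<and> 0 < W x y"
  shows "Ft q r + a / (a - 1) * rel_entropy q (qhat r) + rel_entropy (margX q) (qhX r) = H r"
proof -
  have fst_sum: "rel_entropy (margX q) f = (\<Sum>z\<in>UNIV. q z * ln (margX q (fst z) / f (fst z)))" for f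
    unfolding rel_entropy_def by (rule sum_mult_fst_eq_margX[symmetric])
  have "H r = (\<Sum>z\<in>UNIV. q z * H r)" using q(2) by (simp add: sum_distrib_right[symmetric])
  also have "\<dots> = (\<Sum>z\<in>UNIV. q z * (a / (1 - a) * ln (q z / (margX q (fst z) * W (fst z) (snd z)))
      + ln (r (fst z) (snd z) / margX q (fst z)) + a / (1 - a) * ln (margX q (fst z) / pX (fst z))
      + a / (a - 1) * ln (q z / qhat r z) + ln (margX q (fst z) / qhX r (fst z))))"
  proof (intro sum_mult_cong_nonzero)
    fix z assume "q z \<noteq> 0"
    then have qz: "0 < q z" using q(1)[of z] by simp
    obtain x y where z: "z = (x, y)" by (cases z)
    have xy: "0 < pX x" "0 < W x y" using pos qz z by auto
    show "H r = a / (1 - a) * ln (q z / (margX q (fst z) * W (fst z) (snd z)))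
      + ln (r (fst z) (snd z) / margX q (fst z)) + a / (1 - a) * ln (margX q (fst z) / pX (fst z))
      + a / (a - 1) * ln (q z / qhat r z) + ln (margX q (fst z) / qhX r (fst z))"
      using Ft_integrand_identity[OF r xy qz margX_pos[of q, OF q(1)]] qz z by simp
  qed
  also have "\<dots> = Ft q r + a / (a - 1) * rel_entropy q (qhat r) + rel_entropy (margX q) (qhX r)"
    unfolding Ft_def fst_sum unfolding rel_entropy_def
    by (simp add: split_beta sum.distrib sum_distrib_left algebra_simps)
  finally show ?thesis ..
qed

lemma Ft_le_H:
  assumes r: "rev_channel r" and q: "\<And>z. 0 \<le> q z" "sum q UNIV = 1"
    and pos: "\<And>x y. 0 < q (x, y) \<Longrightarrow> 0 < pX x \<and> 0 < W x y"
  shows "Ft q r \<le> H r"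
proof -
  have "0 \<le> rel_entropy q (qhat r)"
    using q sum_qhat[OF r] pos qhat_posI[OF r] by (intro rel_entropy_nonneg qhat_nonneg r) force+
  then have "0 \<le> a / (a - 1) * rel_entropy q (qhat r)" using a_gt_1 by simp
  moreover have "0 \<le> rel_entropy (margX q) (qhX r)"
  proof (intro rel_entropy_nonneg margX_nonneg qhX_nonneg q r)
    show "0 < qhX r x" if "0 < margX q x" for x
      using margX_pos_imp_ex[OF that] pos qhat_posI[OF r] margX_pos[of "qhat r", OF qhat_nonneg[OF r]]
      by (metis margX_qhat)
    show "sum (qhX r) UNIV \<le> sum (margX q) UNIV" by (simp add: sum_qhX[OF r] sum_margX q(2))
  qed
  ultimately show ?thesis using Ft_compensation[OF assms] by linarith
qed

lemma Ft_qhat_eq_H: "rev_channel r \<Longrightarrow> Ft (qhat r) r = H r"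
  using Ft_compensation[of r "qhat r"] qhat_pos_imp
  by (simp add: qhat_nonneg sum_qhat rel_entropy_self margX_qhat[abs_def])

lemma sum_margY_mult_rev_channel_le_1:
  assumes r: "rev_channel r" and q: "\<And>z. 0 \<le> q z" "sum q UNIV = 1"
  shows "(\<Sum>z\<in>UNIV. margY q (snd z) * r (fst z) (snd z)) \<le> 1"
proof -
  have "(\<Sum>z\<in>UNIV. margY q (snd z) * r (fst z) (snd z)) = (\<Sum>y\<in>UNIV. margY q y * (\<Sum>x\<in>UNIV. r x y))"
    by (simp add: sum_UNIV_prod sum_distrib_left sum.swap[of _ "UNIV::'x set"])
  also have "\<dots> \<le> (\<Sum>y\<in>UNIV. margY q y * 1)"
    by (intro sum_mono mult_left_mono rev_channel_sum_le_1[OF r] margY_nonneg q)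
  finally show ?thesis by (simp add: sum_margY q)
qed

definition log_gain :: "('x \<Rightarrow> 'y \<Rightarrow> real) \<Rightarrow> real" where
  "log_gain r = (\<Sum>z\<in>UNIV. qhat r z * ln (rev_chan (qhat r) (fst z) (snd z) / r (fst z) (snd z)))"

lemma log_gain_nonneg:
  assumes r: "rev_channel r" shows "0 \<le> log_gain r"
proof -
  define q where "q = qhat r"
  define s where "s z = margY q (snd z) * r (fst z) (snd z)" for z
  have q: "0 \<le> q z" "sum q UNIV = 1" for z by (simp_all add: q_def qhat_nonneg[OF r] sum_qhat[OF r])
  have pos: "0 < s z \<and> 0 < r (fst z) (snd z)" if "0 < q z" for z
    using that qhat_pos_imp[OF r, of "fst z" "snd z"] margY_pos[of q "fst z" "snd z", OF q(1)]
    by (simp add: q_def s_def)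
  have "0 \<le> rel_entropy q s"
    using pos q sum_margY_mult_rev_channel_le_1[OF r q]
    by (intro rel_entropy_nonneg) (auto simp: s_def margY_nonneg rev_channel_nonneg[OF r])
  also have "rel_entropy q s = log_gain r"
    unfolding rel_entropy_def log_gain_def q_def[symmetric] using q pos
    by (intro sum_mult_cong_nonzero)
       (force simp: s_def rev_chan_eq order.strict_iff_order mult.commute[of "margY q _"])
  finally show ?thesis .
qed

lemma log_gain_le_H_diff:
  assumes r: "rev_channel r" shows "log_gain r \<le> H (rev_chan (qhat r)) - H r"
proof -
  define q where "q = qhat r"
  have q: "0 \<le> q z" "sum q UNIV = 1" for z by (simp_all add: q_def qhat_nonneg[OF r] sum_qhat[OF r])
  have pos: "0 < pX x \<and> 0 < W x y \<and> 0 < r x y \<and> 0 < rev_chan q x y \<and> 0 < margX q x"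
    if "0 < q (x, y)" for x y
    using that qhat_pos_imp[OF r] rev_chan_pos[of q, OF q(1)] margX_pos[of q, OF q(1)]
    by (simp add: q_def)
  have "Ft q (rev_chan q) - Ft q r = (\<Sum>z\<in>UNIV. q z * ln (rev_chan q (fst z) (snd z) / margX q (fst z)))
      - (\<Sum>z\<in>UNIV. q z * ln (r (fst z) (snd z) / margX q (fst z)))"
    by (simp add: Ft_def)
  also have "\<dots> = log_gain r"
    unfolding log_gain_def q_def[symmetric] sum_subtractf[symmetric] right_diff_distrib[symmetric]
  proof (intro sum_mult_cong_nonzero)
    fix z assume "q z \<noteq> 0"
    then have "0 < q (fst z, snd z)" using q(1)[of z] by simp
    from pos[OF this] show "ln (rev_chan q (fst z) (snd z) / margX q (fst z))
        - ln (r (fst z) (snd z) / margX q (fst z)) = ln (rev_chan q (fst z) (snd z) / r (fst z) (snd z))"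
      by (simp add: ln_div)
  qed
  finally have "Ft q (rev_chan q) - Ft q r = log_gain r" .
  moreover have "Ft q (rev_chan q) \<le> H (rev_chan q)"
    using pos q unfolding q_def by (intro Ft_le_H rev_channel_next r) auto
  ultimately show ?thesis using Ft_qhat_eq_H[OF r] by (simp add: q_def)
qed

lemma hmass_le_Holder:
  assumes r: "rev_channel r" and qY: "is_dist qY" "covers qY" and x: "0 < pX x"
  shows "hmass r x \<le> g qY x powr (1 / a) * (\<Sum>y\<in>UNIV. r x y * qY y) powr (1 - 1 / a)"
proof -
  have "hmass r x = (\<Sum>y\<in>UNIV. (W x y powr a * qY y powr (1 - a)) powr (1 / a) * (r x y * qY y) powr (1 - 1 / a))"
    unfolding hmass_def
  proof (intro sum.cong refl)
    fix y
    show "W x y * r x y powr (1 - 1 / a)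
        = (W x y powr a * qY y powr (1 - a)) powr (1 / a) * (r x y * qY y) powr (1 - 1 / a)"
    proof (cases "W x y = 0")
      case False
      then have "0 < qY y" using coversD[OF qY(2) x] W_nonneg[of x y] by simp
      then show ?thesis using powr_split_Holder W_nonneg rev_channel_nonneg[OF r] a_pos by blast
    qed (use a_pos in simp)
  qed
  also have "\<dots> \<le> g qY x powr (1 / a) * (\<Sum>y\<in>UNIV. r x y * qY y) powr (1 - 1 / a)"
    unfolding g_def using a_gt_1 rev_channel_nonneg[OF r] is_dist_nonneg[OF qY(1)]
    by (intro Holder_inequality_sum[where \<theta> = "1 / a", simplified]) auto
  finally show ?thesis .
qed

lemma Z_le_Phi_powr:
  assumes r: "rev_channel r" and qY: "is_dist qY" "covers qY"
  shows "Z r \<le> Phi qY powr (a / (2 * a - 1))"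
proof -
  define b where "b = a / (2 * a - 1)"
  define sx where "sx x = (\<Sum>y\<in>UNIV. r x y * qY y)" for x
  have b: "0 < b" "b < 1" and eb: "(1 - 1 / a) * b = 1 - b"
    using a_gt_1 by (simp_all add: b_def field_simps)
  have sx: "0 \<le> sx x" for x
    by (simp add: sx_def sum_nonneg rev_channel_nonneg[OF r] is_dist_nonneg[OF qY(1)])
  have "(\<Sum>x\<in>UNIV. sx x) = (\<Sum>y\<in>UNIV. qY y * (\<Sum>x\<in>UNIV. r x y))"
    unfolding sx_def by (simp add: sum.swap[of _ "UNIV::'x set"] sum_distrib_left mult_ac)
  also have "\<dots> \<le> (\<Sum>y\<in>UNIV. qY y * 1)"
    by (intro sum_mono mult_left_mono rev_channel_sum_le_1[OF r] is_dist_nonneg[OF qY(1)])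
  finally have sum_sx: "(\<Sum>x\<in>UNIV. sx x) \<le> 1" by (simp add: is_dist_sum[OF qY(1)])
  have "pX x powr b * hmass r x powr b \<le> (pX x * g qY x powr (1 / a)) powr b * sx x powr (1 - b)" for x
  proof (cases "pX x = 0")
    case False
    then have x: "0 < pX x" using pX_nonneg[of x] by simp
    have "hmass r x powr b \<le> (g qY x powr (1 / a) * sx x powr (1 - 1 / a)) powr b"
      using hmass_le_Holder[OF r qY x] b by (intro powr_mono2) (auto simp: hmass_nonneg sx_def)
    then show ?thesis
      using x g_nonneg[of qY x] sx[of x] by (simp add: powr_mult powr_powr eb mult_left_mono mult.assoc)
  qed (use b in simp)
  then have "Z r \<le> (\<Sum>x\<in>UNIV. (pX x * g qY x powr (1 / a)) powr b * sx x powr (1 - b))"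
    unfolding Z_def b_def[symmetric] by (rule sum_mono)
  also have "\<dots> \<le> Phi qY powr b * (\<Sum>x\<in>UNIV. sx x) powr (1 - b)"
    unfolding Phi_def using b sx by (intro Holder_inequality_sum) (auto simp: pX_nonneg)
  also have "\<dots> \<le> Phi qY powr b"
    using sum_sx b sum_nonneg[of UNIV sx] sx by (simp add: mult_left_le powr_le1)
  finally show ?thesis by (simp add: b_def)
qed

lemma Phi_le_renyi_sum_powr:
  assumes qX: "is_dist qX" and pos: "\<And>x. 0 < pX x \<Longrightarrow> 0 < qX x"
  shows "Phi qY \<le> (\<Sum>x\<in>UNIV. pX x powr a * qX x powr (1 - a) * g qY x) powr (1 / a)"
proof -
  have "Phi qY = (\<Sum>x\<in>UNIV. (pX x powr a * qX x powr (1 - a) * g qY x) powr (1 / a) * qX x powr (1 - 1 / a))"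
    unfolding Phi_def
  proof (intro sum.cong refl)
    fix x
    show "pX x * g qY x powr (1 / a) = (pX x powr a * qX x powr (1 - a) * g qY x) powr (1 / a) * qX x powr (1 - 1 / a)"
    proof (cases "pX x = 0")
      case False
      then have "0 < pX x" "0 < qX x" using pos pX_nonneg[of x] by auto
      then show ?thesis
        using powr_split_Holder[of "pX x" "g qY x" "qX x" a] a_pos g_nonneg[of qY x]
        by (simp add: powr_mult powr_powr mult_ac)
    qed (use a_pos in simp)
  qed
  also have "\<dots> \<le> (\<Sum>x\<in>UNIV. pX x powr a * qX x powr (1 - a) * g qY x) powr (1 / a) * (\<Sum>x\<in>UNIV. qX x) powr (1 - 1 / a)"
    using a_gt_1 is_dist_nonneg[OF qX] g_nonneg
    by (intro Holder_inequality_sum[where \<theta> = "1 / a", simplified]) auto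
  finally show ?thesis by (simp add: is_dist_sum[OF qX])
qed

lemma H_le_renyi_div:
  assumes r: "rev_channel r" and qX: "is_dist qX" and qY: "is_dist qY"
    and fin: "renyi_div a pXY (\<lambda>(x, y). qX x * qY y) \<noteq> \<infinity>"
  shows "ereal (H r) \<le> renyi_div a pXY (\<lambda>(x, y). qX x * qY y)"
proof -
  define s where "s = (\<Sum>z\<in>{z. pXY z > 0}. pXY z powr a * ((\<lambda>(x, y). qX x * qY y) z) powr (1 - a))"
  have nz: "\<not> (\<exists>z. 0 < pXY z \<and> (\<lambda>(x, y). qX x * qY y) z = 0)"
  proof
    assume "\<exists>z. 0 < pXY z \<and> (\<lambda>(x, y). qX x * qY y) z = 0"
    then have "renyi_div a pXY (\<lambda>(x, y). qX x * qY y) = \<infinity>"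
      unfolding renyi_div_def using a_gt_1 by (subst if_P) auto
    then show False using fin by simp
  qed
  then have renyi: "renyi_div a pXY (\<lambda>(x, y). qX x * qY y) = ereal (1 / (a - 1) * ln s)"
    using a_gt_1 by (simp add: renyi_div_def s_def)
  have pos: "0 < qX x \<and> 0 < qY y" if "0 < pX x" "0 < W x y" for x y
  proof -
    have "0 < pXY (x, y)" using that by (simp add: pXY_def)
    then have "qX x * qY y \<noteq> 0" using nz by auto
    then show ?thesis
      using is_dist_nonneg[OF qX, of x] is_dist_nonneg[OF qY, of y] by (simp add: order.strict_iff_order)
  qed
  then have "covers qY" and qX_pos: "\<And>x. 0 < pX x \<Longrightarrow> 0 < qX x"
    using ex_W_pos unfolding covers_def by blast+
  have "Z r \<le> Phi qY powr (a / (2 * a - 1))" using Z_le_Phi_powr[OF r qY \<open>covers qY\<close>] .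
  also have "\<dots> \<le> (s powr (1 / a)) powr (a / (2 * a - 1))"
    using Phi_le_renyi_sum_powr[OF qX qX_pos, of qY] Phi_nonneg[of qY] a_gt_1
    by (intro powr_mono2) (auto simp: s_def renyi_sum_product is_dist_nonneg qX qY)
  also have "\<dots> = s powr (1 / (2 * a - 1))" using a_gt_1 by (simp add: powr_powr)
  finally have Zs: "Z r \<le> s powr (1 / (2 * a - 1))" .
  moreover have "0 \<le> s" unfolding s_def by (intro sum_nonneg) simp
  ultimately have "0 < s" using Z_pos[OF r] by (cases "s = 0") auto
  then have "ln (Z r) \<le> ln (s powr (1 / (2 * a - 1)))"
    using Zs Z_pos[OF r] by (subst ln_le_cancel_iff) auto
  then have "ln (Z r) \<le> 1 / (2 * a - 1) * ln s"
    using \<open>0 < s\<close> by (simp add: ln_powr)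
  then have "H r \<le> 1 / (a - 1) * ln s"
    unfolding H_def using a_gt_1 by (simp add: divide_simps mult.commute)
  then show ?thesis using renyi by simp
qed

definition ratio_moment :: "('x \<Rightarrow> 'y \<Rightarrow> real) \<Rightarrow> 'x \<Rightarrow> real" where
  "ratio_moment r x = (\<Sum>y\<in>UNIV. qhYX r x y * (rev_chan (qhat r) x y / r x y) powr (a - 1))"

definition powr_gain :: "('x \<Rightarrow> 'y \<Rightarrow> real) \<Rightarrow> real" where
  "powr_gain r = (\<Sum>z\<in>UNIV. qhat r z * (rev_chan (qhat r) (fst z) (snd z) / r (fst z) (snd z)) powr (a - 1))"

lemma powr_gain_eq: "powr_gain r = (\<Sum>x\<in>UNIV. qhX r x * ratio_moment r x)"
  unfolding powr_gain_def ratio_moment_def sum_UNIV_prod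
  by (simp add: sum_distrib_left qhat_def mult_ac)

lemma is_dist_margY_qhat: "rev_channel r \<Longrightarrow> is_dist (margY (qhat r))"
  by (simp add: is_dist_margY is_dist_qhat)

lemma covers_margY_qhat: "rev_channel r \<Longrightarrow> covers (margY (qhat r))"
  unfolding covers_def using qhat_posI margY_pos[of "qhat r", OF qhat_nonneg] by blast

lemma g_margY_qhat:
  assumes r: "rev_channel r" and x: "0 < pX x"
  shows "g (margY (qhat r)) x = qhX r x powr (1 - a) * hmass r x powr a * ratio_moment r x"
  unfolding g_def ratio_moment_def sum_distrib_left
proof (intro sum.cong refl)
  fix y
  define qY where "qY = margY (qhat r)"
  show "W x y powr a * margY (qhat r) y powr (1 - a)
      = qhX r x powr (1 - a) * hmass r x powr a * (qhYX r x y * (rev_chan (qhat r) x y / r x y) powr (a - 1))"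
  proof (cases "W x y = 0")
    case False
    then have w: "0 < W x y" using W_nonneg[of x y] by simp
    have pos: "0 < r x y" "0 < hmass r x" "0 < qhX r x" "0 < qhYX r x y" "0 < qY y"
      using rev_channel_pos[OF r x w] hmass_pos[OF r x] qhX_pos[OF r x] qhYX_pos[OF r x w]
        margY_pos[of "qhat r", OF qhat_nonneg[OF r] qhat_posI[OF r x w]]
      by (simp_all add: qY_def)
    have rho: "rev_chan (qhat r) x y = qhX r x * qhYX r x y / qY y"
      by (simp add: rev_chan_eq qY_def qhat_def)
    have "ln (W x y powr a * qY y powr (1 - a))
        = ln (qhX r x powr (1 - a) * hmass r x powr a * (qhYX r x y * (rev_chan (qhat r) x y / r x y) powr (a - 1)))"
      using pos w a_gt_1 unfolding rho
      by (simp add: ln_mult ln_div ln_qhYX[OF r x w]) (simp add: field_simps)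
    then show ?thesis using pos w rho by (simp add: qY_def)
  qed (simp add: qhYX_def)
qed

lemma pX_g_powr_margY_qhat:
  assumes r: "rev_channel r"
  shows "pX x * g (margY (qhat r)) x powr (1 / a)
       = Z r powr ((2 * a - 1) / a) * (qhX r x * ratio_moment r x powr (1 / a))"
proof (cases "pX x = 0")
  case False
  then have x: "0 < pX x" using pX_nonneg[of x] by simp
  have pos: "0 < hmass r x" "0 < qhX r x" "0 < Z r" using hmass_pos[OF r x] qhX_pos[OF r x] Z_pos[OF r] .
  have m: "0 \<le> ratio_moment r x"
    by (simp add: ratio_moment_def sum_nonneg qhYX_nonneg[OF r])
  have "ln (pX x * qhX r x powr ((1 - a) / a) * hmass r x) = ln (Z r powr ((2 * a - 1) / a) * qhX r x)"
    using x pos a_gt_1 by (simp add: ln_mult ln_qhX[OF r x] field_simps)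
  then have "pX x * qhX r x powr ((1 - a) / a) * hmass r x = Z r powr ((2 * a - 1) / a) * qhX r x"
    using x pos by simp
  moreover have "g (margY (qhat r)) x powr (1 / a) = qhX r x powr ((1 - a) / a) * hmass r x * ratio_moment r x powr (1 / a)"
    using g_margY_qhat[OF r x] pos m a_gt_1 by (simp add: powr_mult powr_powr)
  ultimately show ?thesis by (simp add: mult_ac)
qed (simp add: qhX_def)

lemma renyi_min_margY_qhat_le:
  assumes r: "rev_channel r"
  shows "renyi_min (margY (qhat r)) \<le> H r + (powr_gain r - 1) / (a - 1)"
proof -
  define K where "K = powr_gain r / a + (1 - 1 / a)"
  have Z: "0 < Z r" using Z_pos[OF r] .
  have "Phi (margY (qhat r)) = Z r powr ((2 * a - 1) / a) * (\<Sum>x\<in>UNIV. qhX r x * ratio_moment r x powr (1 / a))"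
    unfolding Phi_def by (simp add: pX_g_powr_margY_qhat[OF r] sum_distrib_left)
  also have "\<dots> \<le> Z r powr ((2 * a - 1) / a) * (\<Sum>x\<in>UNIV. qhX r x * (ratio_moment r x / a + (1 - 1 / a)))"
  proof -
    have "ratio_moment r x powr (1 / a) * 1 powr (1 - 1 / a) \<le> 1 / a * ratio_moment r x + (1 - 1 / a) * 1" for x
      using a_gt_1 by (intro weighted_AM_GM) (auto simp: ratio_moment_def sum_nonneg qhYX_nonneg[OF r])
    then show ?thesis by (intro mult_left_mono sum_mono) (auto simp: qhX_nonneg[OF r])
  qed
  also have "\<dots> = Z r powr ((2 * a - 1) / a) * K"
    by (simp add: K_def powr_gain_eq distrib_left sum.distrib sum_divide_distrib[symmetric]
        sum_distrib_left[symmetric] sum_qhX[OF r] mult_ac)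
  finally have Phi_le: "Phi (margY (qhat r)) \<le> Z r powr ((2 * a - 1) / a) * K" .
  have Phi: "0 < Phi (margY (qhat r))" using Phi_pos[OF covers_margY_qhat[OF r]] .
  then have "0 < Z r powr ((2 * a - 1) / a) * K" using Phi_le by linarith
  then have K: "0 < K" using Z by (simp add: zero_less_mult_iff)
  have "ln (Phi (margY (qhat r))) \<le> ln (Z r powr ((2 * a - 1) / a) * K)"
    using Phi_le Phi Z K by (subst ln_le_cancel_iff) auto
  also have "\<dots> \<le> (2 * a - 1) / a * ln (Z r) + (K - 1)"
    using Z K ln_le_minus_one[OF K] by (simp add: ln_mult)
  finally have "a / (a - 1) * ln (Phi (margY (qhat r))) \<le> a / (a - 1) * ((2 * a - 1) / a * ln (Z r) + (K - 1))"
    using a_gt_1 by (intro mult_left_mono) auto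
  also have "\<dots> = H r + (powr_gain r - 1) / (a - 1)"
    using a_gt_1 by (simp add: H_def K_def divide_simps)
  finally show ?thesis by (simp add: renyi_min_def)
qed

lemma powr_gain_pointwise:
  assumes r: "rev_channel r" and T: "1 \<le> T" and lb: "0 < qhat r (x, y) \<Longrightarrow> 1 \<le> T * r x y"
  defines "q \<equiv> qhat r (x, y)" and "R \<equiv> margY (qhat r) y * r x y"
    and "t \<equiv> rev_chan (qhat r) x y / r x y"
  shows "q * t powr (a - 1) - R - a * (q - R)
       \<le> (a * (a - 1) * T powr (a - 1) + (a - 1)) * (q * ln t - q + R)"
proof (cases "r x y = 0")
  case True
  then have "q = 0" using qhat_pos_imp[OF r, of x y] qhat_nonneg[OF r, of "(x, y)"] by (force simp: q_def)
  then show ?thesis using True by (simp add: R_def)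
next
  case False
  then have rp: "0 < r x y" using rev_channel_nonneg[OF r, of x y] by simp
  have qhat: "\<And>z. 0 \<le> qhat r z" using qhat_nonneg[OF r] .
  have R: "0 \<le> R" by (simp add: R_def margY_nonneg[OF qhat] rev_channel_nonneg[OF r])
  have t: "0 \<le> t" by (simp add: t_def rev_chan_nonneg[OF qhat] rev_channel_nonneg[OF r])
  have q: "q = R * t" using margY_mult_rev_chan[of "qhat r" y x, OF qhat] rp by (simp add: q_def R_def t_def)
  have "t \<le> T"
  proof (cases "q = 0")
    case False
    then have "1 \<le> T * r x y" using lb qhat[of "(x, y)"] by (simp add: q_def order.strict_iff_order)
    moreover have "rev_chan (qhat r) x y \<le> 1" by (rule rev_chan_le_1[OF qhat])
    ultimately show ?thesis using rp by (simp add: t_def divide_le_eq)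
  next
    case True
    then show ?thesis using T by (simp add: t_def rev_chan_eq q_def)
  qed
  then have "R * (t powr a - 1 - a * (t - 1))
      \<le> R * ((a * (a - 1) * T powr (a - 1) + (a - 1)) * (t * ln t - t + 1))"
    using powr_bregman_le_xlnx_bregman[OF a_gt_1 T t] R by (intro mult_left_mono)
  moreover have "q * t powr (a - 1) - R - a * (q - R) = R * (t powr a - 1 - a * (t - 1))"
  proof -
    have "t * t powr (a - 1) = t powr a" using t by (cases "t = 0") (simp_all add: powr_diff)
    then show ?thesis unfolding q by (simp add: right_diff_distrib mult.assoc)
  qed
  moreover have "(a * (a - 1) * T powr (a - 1) + (a - 1)) * (q * ln t - q + R)
      = R * ((a * (a - 1) * T powr (a - 1) + (a - 1)) * (t * ln t - t + 1))"
    unfolding q by (simp add: algebra_simps)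
  ultimately show ?thesis by linarith
qed

lemma powr_gain_le_log_gain:
  assumes r: "rev_channel r" and T: "1 \<le> T" and lb: "\<And>x y. 0 < qhat r (x, y) \<Longrightarrow> 1 \<le> T * r x y"
  shows "powr_gain r - 1 \<le> (a * (a - 1) * T powr (a - 1) + (a - 1)) * log_gain r"
proof -
  define C where "C = a * (a - 1) * T powr (a - 1) + (a - 1)"
  define R where "R z = margY (qhat r) (snd z) * r (fst z) (snd z)" for z
  have C: "a - 1 \<le> C" using a_gt_1 by (simp add: C_def)
  have R: "sum R UNIV \<le> 1"
    unfolding R_def by (rule sum_margY_mult_rev_channel_le_1[OF r qhat_nonneg[OF r] sum_qhat[OF r]])
  have "powr_gain r - sum R UNIV - a * (1 - sum R UNIV)
      = (\<Sum>z\<in>UNIV. qhat r z * (rev_chan (qhat r) (fst z) (snd z) / r (fst z) (snd z)) powr (a - 1)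
           - R z - a * (qhat r z - R z))"
    using sum_qhat[OF r] by (simp add: powr_gain_def sum_subtractf right_diff_distrib sum_distrib_left[symmetric])
  also have "\<dots> \<le> (\<Sum>z\<in>UNIV. C * (qhat r z * ln (rev_chan (qhat r) (fst z) (snd z) / r (fst z) (snd z))
           - qhat r z + R z))"
  proof (rule sum_mono)
    fix z :: "'x \<times> 'y"
    show "qhat r z * (rev_chan (qhat r) (fst z) (snd z) / r (fst z) (snd z)) powr (a - 1) - R z
        - a * (qhat r z - R z)
      \<le> C * (qhat r z * ln (rev_chan (qhat r) (fst z) (snd z) / r (fst z) (snd z)) - qhat r z + R z)"
      using powr_gain_pointwise[OF r T lb, where x = "fst z" and y = "snd z"] by (simp add: C_def R_def)
  qed
  also have "\<dots> = C * (log_gain r - 1 + sum R UNIV)"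
    by (simp add: log_gain_def sum_distrib_left[symmetric] sum.distrib sum_subtractf sum_qhat[OF r])
  finally have "powr_gain r - 1 \<le> C * log_gain r - (1 - sum R UNIV) * (C - (a - 1))"
    by (simp add: algebra_simps)
  moreover have "0 \<le> (1 - sum R UNIV) * (C - (a - 1))" using R C by simp
  ultimately show ?thesis by (simp add: C_def)
qed

lemma rev_chan_qhat_lower_bound:
  assumes r: "rev_channel r" and mu: "0 < mu" "mu \<le> 1"
    and lb_r: "\<And>x y. 0 < pX x \<Longrightarrow> 0 < W x y \<Longrightarrow> mu \<le> r x y"
    and lb_p: "\<And>x y. 0 < pX x \<Longrightarrow> 0 < W x y \<Longrightarrow> mu powr (1 / a) * real CARD('x) \<le> pX x * W x y"
    and xy: "0 < pX x" "0 < W x y"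
  shows "mu \<le> rev_chan (qhat r) x y"
proof -
  define b e where "b = a / (2 * a - 1)" and "e = 1 - 1 / a"
  have b: "0 < b" "b \<le> 1" and e: "0 \<le> e" using a_gt_1 by (simp_all add: b_def e_def)
  have h: "0 < hmass r x" "hmass r x \<le> 1" using hmass_pos[OF r xy(1)] hmass_le_1[OF r] .
  have "mu = mu powr (1 / a) * mu powr e" using mu by (simp add: e_def flip: powr_add)
  also have "\<dots> \<le> pX x * W x y / real CARD('x) * mu powr e"
    using lb_p[OF xy] by (intro mult_right_mono) (auto simp: le_divide_eq)
  also have "\<dots> = pX x * (W x y * mu powr e) / real CARD('x)" by simp
  also have "\<dots> \<le> pX x powr b * (hmass r x powr b / hmass r x) * (W x y * r x y powr e) / Z r"
  proof (intro frac_le mult_mono)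
    show "pX x \<le> pX x powr b * (hmass r x powr b / hmass r x)"
      using powr_mono'[of b 1 "pX x"] powr_mono'[of b 1 "hmass r x"] b h xy is_dist_le_1[OF pX, of x]
      by (simp add: le_divide_eq mult_mono)
    show "mu powr e \<le> r x y powr e" using lb_r[OF xy] mu e by (intro powr_mono2) auto
    show "Z r \<le> real CARD('x)" by (rule Z_le_card[OF r])
  qed (use Z_pos[OF r] xy W_nonneg hmass_nonneg in auto)
  also have "\<dots> = qhat r (x, y)" by (simp add: qhat_def qhX_def qhYX_def b_def e_def)
  also have "\<dots> \<le> rev_chan (qhat r) x y" by (rule le_rev_chan[OF is_dist_qhat[OF r]])
  finally show ?thesis .
qed

lemma step_ii_iterates_rev_channel:
  assumes "\<And>z. 0 < q0 z"
  shows "rev_channel (rev_chan ((step_ii a pX W ^^ k) q0))"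
proof (induction k)
  case 0
  show ?case using assms by (intro rev_channel_rev_chan) (auto simp: less_imp_le)
next
  case (Suc k)
  then show ?case by (simp add: step_ii_eq_qhat rev_channel_next)
qed

lemma step_ii_iterates_lower_bound:
  assumes q0: "is_dist q0" "\<And>z. 0 < q0 z"
  obtains mu where "0 < mu" "mu \<le> 1"
    "\<And>k x y. 0 < pX x \<Longrightarrow> 0 < W x y \<Longrightarrow> mu \<le> rev_chan ((step_ii a pX W ^^ k) q0) x y"
proof -
  obtain e1 where e1: "0 < e1" "\<And>z. 0 < pXY z \<Longrightarrow> e1 \<le> pXY z" using finite_ex_pos_lower_bound by blast
  obtain e0 where e0: "0 < e0" "\<And>z. 0 < q0 z \<Longrightarrow> e0 \<le> q0 z" using finite_ex_pos_lower_bound by blast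
  define mu where "mu = min e0 ((e1 / real CARD('x)) powr a)"
  have "e0 \<le> 1" using e0(2)[OF q0(2)] is_dist_le_1[OF q0(1)] order.trans by blast
  then have mu: "0 < mu" "mu \<le> 1" using e0 e1 by (auto simp: mu_def min.coboundedI1)
  have lb_p: "mu powr (1 / a) * real CARD('x) \<le> pX x * W x y" if "0 < pX x" "0 < W x y" for x y
  proof -
    have "mu powr (1 / a) \<le> ((e1 / real CARD('x)) powr a) powr (1 / a)"
      using mu a_pos by (intro powr_mono2) (auto simp: mu_def)
    also have "\<dots> = e1 / real CARD('x)" using e1 a_pos by (simp add: powr_powr)
    finally show ?thesis using e1(2)[of "(x, y)"] that by (simp add: pXY_def le_divide_eq)
  qed
  have "mu \<le> rev_chan ((step_ii a pX W ^^ k) q0) x y" if "0 < pX x" "0 < W x y" for k x y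
    using that
  proof (induction k arbitrary: x y)
    case 0
    have "mu \<le> q0 (x, y)" using e0 q0(2) by (simp add: mu_def min.coboundedI1)
    then show ?case using le_rev_chan[OF q0(1), of x y] by simp
  next
    case (Suc k)
    have "rev_channel (rev_chan ((step_ii a pX W ^^ k) q0))"
      using q0(2) by (rule step_ii_iterates_rev_channel)
    from rev_chan_qhat_lower_bound[OF this mu Suc.IH lb_p Suc.prems]
    show ?case by (simp add: step_ii_eq_qhat)
  qed
  then show ?thesis using that mu by blast
qed

lemma Ft_LP_qhat: "rev_channel r \<Longrightarrow> Ft_LP a pX W (qhat r) r = ereal (H r)"
  using Ft_LP_eq_Ft[of "qhat r" r] qhat_nonneg qhat_pos_imp Ft_qhat_eq_H by simp

lemma H_le_rev_chan_qhat: "rev_channel r \<Longrightarrow> H r \<le> H (rev_chan (qhat r))"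
  using log_gain_nonneg log_gain_le_H_diff by fastforce

lemma H_le_I_LP:
  assumes r: "rev_channel r" shows "ereal (H r) \<le> I_LP a pX W"
  unfolding I_LP_eq
proof (intro INF_greatest)
  fix qX :: "'x \<Rightarrow> real" and qY :: "'y \<Rightarrow> real" assume "qX \<in> {q. is_dist q}" "qY \<in> {q. is_dist q}"
  then show "ereal (H r) \<le> renyi_div a pXY (\<lambda>(x, y). qX x * qY y)"
    using H_le_renyi_div[OF r] by (cases "renyi_div a pXY (\<lambda>(x, y). qX x * qY y) = \<infinity>") auto
qed

lemma I_LP_le_H_plus_increment:
  assumes r: "rev_channel r" and mu: "0 < mu" "mu \<le> 1"
    and lb: "\<And>x y. 0 < pX x \<Longrightarrow> 0 < W x y \<Longrightarrow> mu \<le> r x y"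
  shows "I_LP a pX W \<le> ereal (H r + (a * (1 / mu) powr (a - 1) + 1) * (H (rev_chan (qhat r)) - H r))"
proof -
  define K where "K = a * (1 / mu) powr (a - 1) + 1"
  have K: "0 \<le> K" by (simp add: K_def a_pos less_imp_le)
  have "1 \<le> 1 / mu" using mu by simp
  moreover have "1 \<le> 1 / mu * r x y" if "0 < qhat r (x, y)" for x y
    using mu(1) lb qhat_pos_imp[OF r that] by (simp add: le_divide_eq)
  ultimately have "powr_gain r - 1 \<le> (a - 1) * K * log_gain r"
    using powr_gain_le_log_gain[OF r] by (simp add: K_def algebra_simps)
  also have "\<dots> \<le> (a - 1) * K * (H (rev_chan (qhat r)) - H r)"
    using log_gain_le_H_diff[OF r] K a_gt_1 by (intro mult_left_mono) auto
  finally have "(powr_gain r - 1) / (a - 1) \<le> K * (H (rev_chan (qhat r)) - H r)"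
    using a_gt_1 by (simp add: divide_le_eq mult_ac)
  then have "renyi_min (margY (qhat r)) \<le> H r + K * (H (rev_chan (qhat r)) - H r)"
    using renyi_min_margY_qhat_le[OF r] by linarith
  moreover have "I_LP a pX W \<le> ereal (renyi_min (margY (qhat r)))"
    using I_LP_le_renyi_min is_dist_margY_qhat covers_margY_qhat r by blast
  ultimately show ?thesis by (simp add: K_def order.trans)
qed

theorem Ft_LP_step_ii_tendsto_I_LP:
  assumes q0: "is_dist q0" "\<And>z. 0 < q0 z"
  shows "(\<lambda>k. Ft_LP a pX W ((step_ii a pX W ^^ Suc k) q0) (rev_chan ((step_ii a pX W ^^ k) q0)))
           \<longlonglongrightarrow> I_LP a pX W"
proof -
  define rs where "rs k = rev_chan ((step_ii a pX W ^^ k) q0)" for k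
  have rs: "rev_channel (rs k)" for k unfolding rs_def using q0(2) by (rule step_ii_iterates_rev_channel)
  have rs_Suc: "rs (Suc k) = rev_chan (qhat (rs k))" for k by (simp add: rs_def step_ii_eq_qhat)
  obtain mu where mu: "0 < mu" "mu \<le> 1" "\<And>k x y. 0 < pX x \<Longrightarrow> 0 < W x y \<Longrightarrow> mu \<le> rs k x y"
    using step_ii_iterates_lower_bound[OF q0] unfolding rs_def by blast
  have "(\<lambda>k. ereal (H (rs k))) \<longlonglongrightarrow> I_LP a pX W"
  proof (rule incseq_tendsto_ereal_squeeze)
    show "incseq (\<lambda>k. H (rs k))" using H_le_rev_chan_qhat[OF rs] by (intro incseq_SucI) (simp add: rs_Suc)
    show "ereal (H (rs k)) \<le> I_LP a pX W" for k using H_le_I_LP[OF rs] .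
    show "I_LP a pX W \<le> ereal (H (rs k) + (a * (1 / mu) powr (a - 1) + 1) * (H (rs (Suc k)) - H (rs k)))" for k
      using I_LP_le_H_plus_increment[OF rs mu(1,2) mu(3)] by (simp add: rs_Suc)
  qed
  then show ?thesis using Ft_LP_qhat[OF rs] by (simp add: rs_def step_ii_eq_qhat)
qed

end

theorem corollary4:
  fixes a :: real
    and pX :: "'x::finite \<Rightarrow> real"
    and W :: "'x \<Rightarrow> 'y::finite \<Rightarrow> real"
    and q0 :: "'x \<times> 'y \<Rightarrow> real"
  assumes alpha: "a \<in> {1/2..<1} \<union> {1<..}"
    and pX: "is_dist pX"
    and W: "\<And>x. is_dist (W x)"
    and q0: "is_dist q0"
    and q0_pos: "\<And>z. q0 z > 0"
  shows "(a < 1 \<longrightarrow>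
           (\<lambda>k. F_LP a pX W ((step_i a pX W ^^ Suc k) q0) (margY ((step_i a pX W ^^ k) q0)))
             \<longlonglongrightarrow> I_LP a pX W)
       \<and> (1 < a \<longrightarrow>
           (\<lambda>k. Ft_LP a pX W ((step_ii a pX W ^^ Suc k) q0) (rev_chan ((step_ii a pX W ^^ k) q0)))
             \<longlonglongrightarrow> I_LP a pX W)"
proof (intro conjI impI)
  assume "a < 1"
  then interpret channel_lt1 a pX W
    using alpha pX W by unfold_locales auto
  show "(\<lambda>k. F_LP a pX W ((step_i a pX W ^^ Suc k) q0) (margY ((step_i a pX W ^^ k) q0)))
      \<longlonglongrightarrow> I_LP a pX W"
    using F_LP_step_i_tendsto_I_LP[OF q0 q0_pos] .
next
  assume "1 < a"
  then interpret channel_gt1 a pX W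
    using alpha pX W by unfold_locales auto
  show "(\<lambda>k. Ft_LP a pX W ((step_ii a pX W ^^ Suc k) q0) (rev_chan ((step_ii a pX W ^^ k) q0)))
      \<longlonglongrightarrow> I_LP a pX W"
    using Ft_LP_step_ii_tendsto_I_LP[OF q0 q0_pos] .
qed

end
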